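(* Let $\mu$ be an $N\times N$ matrix measure satisfying the standing assumptions below, $\{P_n\}$ its orthonormal matrix polynomials with $P_0=M_0^{-1/2}$ and recurrence coefficients $A_n$ (invertible), $B_n$ (self-adjoint), $Q_n(z)=\int\frac{P_n(z)-P_n(x)}{z-x}W(x)d\tau_\mu(x)$, $S(z)=\int\frac{W(x)}{x-z}d\tau_\mu(x)$, $F_k(z)=Q_k(z)+P_k(z)S(z)$. Let $J$ be the Jacobi operator on $\ell^2(\mathbb{C}^N)$ with domain $\mathcal{D}$ (finite sums) given by $JV=e_0\otimes(A_0v_1+B_0v_0)+\sum_{n\ge1}e_n\otimes(A_nv_{n+1}+B_nv_n+A_{n-1}^\ast v_{n-1})$, and let $(J^\ast,\mathcal{D}^\ast)$ be its adjoint. Assume that for every $z\in\mathbb{C}\setminus\mathbb{R}$ and every nonzero $v\in\mathbb{C}^N$, $\sum_{n=0}^\infty\|P_n(z)v\|^2=\infty$. For $z\in\mathbb{C}\setminus\mathbb{R}$ define $G_z$ on $\mathcal{D}$ by $G_zV=\sum_ne_n\otimes\sum_k(G_z)_{n,k}v_k$ with $$(G_z)_{n,k}=\begin{cases}P_n(z)F_k^\ast(z),&n\le k,\\ F_n(z)P_k^\ast(z),&n>k.\end{cases}$$ Then $G_z$ is the resolvent of $J^\ast$: $z$ lies in the resolvent set of $J^\ast$, $G_z$ extends to a bounded operator on $\ell^2(\mathbb{C}^N)$, and $G_z=(J^\ast-z)^{-1}$.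
   Context: Matrix measure $\mu$: $\sigma$-additive map from Borel sets of $\mathbb{R}$ to positive semi-definite $N\times N$ matrices; $\tau_\mu=\mathrm{Tr}\,\mu$; $\mu(B)_{i,j}=\int_BW_{i,j}d\tau_\mu$. Standing assumptions: $\tau_\mu$ has infinite support, all moments $\int x^kW_{i,j}d\tau_\mu$ finite, $W(x)$ positive definite $\tau_\mu$-a.e.; $M_0=\int Wd\tau_\mu$. For a matrix-valued function $F$, $F^\ast(z)=(F(\bar z))^\ast$. Orthonormal polynomials: $\deg P_n=n$, invertible leading coefficient, $\int P_nWP_m^\ast d\tau_\mu=\delta_{n,m}I$, satisfying $zP_n=A_nP_{n+1}+B_nP_n+A_{n-1}^\ast P_{n-1}$ ($n\ge1$), $zP_0=A_0P_1+B_0P_0$. $\ell^2(\mathbb{C}^N)$ is the Hilbert space of square-summable $\mathbb{C}^N$-valued sequences $\sum e_n\otimes v_n$. *)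

theory Defs
  imports "HOL-Analysis.Analysis"
begin

type_synonym 'n cmat = "complex ^ 'n ^ 'n"
type_synonym 'n cvec = "complex ^ 'n"
type_synonym 'n seq = "nat \<Rightarrow> complex ^ 'n"

definition madj :: "'n::finite cmat \<Rightarrow> 'n cmat" where
  "madj M = (\<chi> i j. cnj (M $ j $ i))"

definition smat :: "complex \<Rightarrow> 'n::finite cmat \<Rightarrow> 'n cmat" where
  "smat c M = (\<chi> i j. c * M $ i $ j)"

definition mtrace :: "'n::finite cmat \<Rightarrow> complex" where
  "mtrace M = (\<Sum>i\<in>UNIV. M $ i $ i)"

definition cinner :: "'n::finite cvec \<Rightarrow> 'n cvec \<Rightarrow> complex" where
  "cinner u v = (\<Sum>i\<in>UNIV. u $ i * cnj (v $ i))"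

definition hermitian :: "'n::finite cmat \<Rightarrow> bool" where
  "hermitian M \<longleftrightarrow> madj M = M"

definition posdef :: "'n::finite cmat \<Rightarrow> bool" where
  "posdef M \<longleftrightarrow> hermitian M \<and> (\<forall>v. v \<noteq> 0 \<longrightarrow> 0 < Re (cinner (M *v v) v))"

definition inv_sqrt :: "'n::finite cmat \<Rightarrow> 'n cmat" where
  "inv_sqrt M = (THE R. posdef R \<and> R ** R = matrix_inv M)"

definition measure_support :: "real measure \<Rightarrow> real set" where
  "measure_support \<tau> = {x. \<forall>e>0. emeasure \<tau> (ball x e) > 0}"

text \<open>Standing assumptions on the matrix measure mu(B) = integral over B of W d tau,
  where tau = Tr mu (so Tr W = 1 tau-a.e.).\<close>
definition standing_assumptions :: "real measure \<Rightarrow> (real \<Rightarrow> 'n::finite cmat) \<Rightarrow> bool" where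
  "standing_assumptions \<tau> W \<longleftrightarrow>
     sets \<tau> = sets borel \<and> finite_measure \<tau> \<and>
     (AE x in \<tau>. mtrace (W x) = 1) \<and>
     infinite (measure_support \<tau>) \<and>
     (\<forall>k::nat. \<forall>i j. integrable \<tau> (\<lambda>x. x ^ k * Re (W x $ i $ j)) \<and>
                   integrable \<tau> (\<lambda>x. x ^ k * Im (W x $ i $ j))) \<and>
     (AE x in \<tau>. posdef (W x))"

definition moment0 :: "real measure \<Rightarrow> (real \<Rightarrow> 'n::finite cmat) \<Rightarrow> 'n cmat" where
  "moment0 \<tau> W = integral\<^sup>L \<tau> W"

definition matrix_poly_seq :: "(nat \<Rightarrow> complex \<Rightarrow> 'n::finite cmat) \<Rightarrow> bool" where
  "matrix_poly_seq P \<longleftrightarrow> (\<exists>C :: nat \<Rightarrow> nat \<Rightarrow> 'n cmat.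
      (\<forall>n z. P n z = (\<Sum>j\<le>n. smat (z ^ j) (C n j))) \<and> (\<forall>n. invertible (C n n)))"

definition orthonormal_polys ::
  "real measure \<Rightarrow> (real \<Rightarrow> 'n::finite cmat) \<Rightarrow> (nat \<Rightarrow> complex \<Rightarrow> 'n cmat) \<Rightarrow> bool" where
  "orthonormal_polys \<tau> W P \<longleftrightarrow> matrix_poly_seq P \<and>
     (\<forall>n m. integral\<^sup>L \<tau> (\<lambda>x. P n (of_real x) ** W x ** madj (P m (of_real x)))
            = (if n = m then mat 1 else 0))"

definition three_term ::
  "(nat \<Rightarrow> complex \<Rightarrow> 'n::finite cmat) \<Rightarrow> (nat \<Rightarrow> 'n cmat) \<Rightarrow> (nat \<Rightarrow> 'n cmat) \<Rightarrow> bool" where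
  "three_term P A B \<longleftrightarrow>
     (\<forall>z. smat z (P 0 z) = A 0 ** P 1 z + B 0 ** P 0 z) \<and>
     (\<forall>n z. n \<ge> 1 \<longrightarrow> smat z (P n z) = A n ** P (Suc n) z + B n ** P n z + madj (A (n - 1)) ** P (n - 1) z)"

definition Qfun :: "real measure \<Rightarrow> (real \<Rightarrow> 'n::finite cmat) \<Rightarrow> (nat \<Rightarrow> complex \<Rightarrow> 'n cmat)
    \<Rightarrow> nat \<Rightarrow> complex \<Rightarrow> 'n cmat" where
  "Qfun \<tau> W P n z = integral\<^sup>L \<tau> (\<lambda>x. smat (1 / (z - of_real x)) (P n z - P n (of_real x)) ** W x)"

definition Sfun :: "real measure \<Rightarrow> (real \<Rightarrow> 'n::finite cmat) \<Rightarrow> complex \<Rightarrow> 'n cmat" where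
  "Sfun \<tau> W z = integral\<^sup>L \<tau> (\<lambda>x. smat (1 / (of_real x - z)) (W x))"

definition Ffun :: "real measure \<Rightarrow> (real \<Rightarrow> 'n::finite cmat) \<Rightarrow> (nat \<Rightarrow> complex \<Rightarrow> 'n cmat)
    \<Rightarrow> nat \<Rightarrow> complex \<Rightarrow> 'n cmat" where
  "Ffun \<tau> W P k z = Qfun \<tau> W P k z + P k z ** Sfun \<tau> W z"

definition star_fun :: "(complex \<Rightarrow> 'n::finite cmat) \<Rightarrow> complex \<Rightarrow> 'n cmat" where
  "star_fun F z = madj (F (cnj z))"

definition l2 :: "'n::finite seq set" where
  "l2 = {V. summable (\<lambda>n. (norm (V n))\<^sup>2)}"

definition l2_inner :: "'n::finite seq \<Rightarrow> 'n seq \<Rightarrow> complex" where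
  "l2_inner V U = (\<Sum>n. cinner (V n) (U n))"

definition l2_norm :: "'n::finite seq \<Rightarrow> real" where
  "l2_norm V = sqrt (\<Sum>n. (norm (V n))\<^sup>2)"

text \<open>Finite sums of e_n \<otimes> v_n.\<close>
definition finseq :: "'n::finite seq set" where
  "finseq = {V. \<exists>M. \<forall>n\<ge>M. V n = 0}"

definition jacobi :: "(nat \<Rightarrow> 'n::finite cmat) \<Rightarrow> (nat \<Rightarrow> 'n cmat) \<Rightarrow> 'n seq \<Rightarrow> 'n seq" where
  "jacobi A B V n = A n *v V (Suc n) + B n *v V n +
      (if n = 0 then 0 else madj (A (n - 1)) *v V (n - 1))"

definition jacobi_adj_dom :: "(nat \<Rightarrow> 'n::finite cmat) \<Rightarrow> (nat \<Rightarrow> 'n cmat) \<Rightarrow> 'n seq set" where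
  "jacobi_adj_dom A B = {U \<in> l2. \<exists>Y\<in>l2. \<forall>V\<in>finseq. l2_inner (jacobi A B V) U = l2_inner V Y}"

definition jacobi_adj :: "(nat \<Rightarrow> 'n::finite cmat) \<Rightarrow> (nat \<Rightarrow> 'n cmat) \<Rightarrow> 'n seq \<Rightarrow> 'n seq" where
  "jacobi_adj A B U = (THE Y. Y \<in> l2 \<and> (\<forall>V\<in>finseq. l2_inner (jacobi A B V) U = l2_inner V Y))"

definition is_resolvent :: "('n::finite seq \<Rightarrow> 'n seq) \<Rightarrow> 'n seq set \<Rightarrow> complex \<Rightarrow> ('n seq \<Rightarrow> 'n seq) \<Rightarrow> bool" where
  "is_resolvent T D z G \<longleftrightarrow>
     (\<forall>F\<in>l2. G F \<in> l2) \<and>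
     (\<forall>F\<in>l2. \<forall>H\<in>l2. \<forall>c a. G (\<lambda>n. c *s F n + a *s H n) = (\<lambda>n. c *s G F n + a *s G H n)) \<and>
     (\<exists>C. \<forall>F\<in>l2. l2_norm (G F) \<le> C * l2_norm F) \<and>
     (\<forall>F\<in>l2. G F \<in> D \<and> (\<lambda>n. T (G F) n - z *s G F n) = F) \<and>
     (\<forall>U\<in>D. G (\<lambda>n. T U n - z *s U n) = U)"

definition resolvent_set :: "('n::finite seq \<Rightarrow> 'n seq) \<Rightarrow> 'n seq set \<Rightarrow> complex set" where
  "resolvent_set T D = {z. \<exists>G. is_resolvent T D z G}"

definition Gmat :: "real measure \<Rightarrow> (real \<Rightarrow> 'n::finite cmat) \<Rightarrow> (nat \<Rightarrow> complex \<Rightarrow> 'n cmat)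
   \<Rightarrow> complex \<Rightarrow> nat \<Rightarrow> nat \<Rightarrow> 'n cmat" where
  "Gmat \<tau> W P z n k = (if n \<le> k then P n z ** star_fun (Ffun \<tau> W P k) z
                          else Ffun \<tau> W P n z ** star_fun (P k) z)"

definition Gop :: "real measure \<Rightarrow> (real \<Rightarrow> 'n::finite cmat) \<Rightarrow> (nat \<Rightarrow> complex \<Rightarrow> 'n cmat)
   \<Rightarrow> complex \<Rightarrow> 'n seq \<Rightarrow> 'n seq" where
  "Gop \<tau> W P z V n = (\<Sum>k. Gmat \<tau> W P z n k *v V k)"

end

theory Submission
  imports Defs "HOL-Library.Diagonal_Subsequence"
begin

text \<open>Green's formula makes \<open>J\<close> symmetric on finite sequences, so its adjoint is the maximal
  operator on \<open>{U \<in> \<ell>\<^sup>2. JU \<in> \<ell>\<^sup>2}\<close>, and for finitely supported \<open>X\<close> it gives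
  \<open>|Im z| \<parallel>X\<parallel> \<le> \<parallel>(J - z) X\<parallel>\<close>. The latter makes every \<open>P\<^sub>M(z)\<close> invertible, so the forward
  solution of \<open>(J - z) U = F\<close> can be corrected to vanish at \<open>M\<close>; these truncated solutions are
  bounded by \<open>\<parallel>F\<parallel> / |Im z|\<close>, and a diagonal subsequence converges pointwise to an \<open>\<ell>\<^sup>2\<close> solution
  obeying the same bound. The divergence hypothesis says that \<open>z\<close> is no eigenvalue of \<open>J\<^sup>*\<close>, which
  gives uniqueness, so \<open>(J\<^sup>* - z)\<^sup>-\<^sup>1\<close> exists and is bounded.

  On finite sequences the inverse is given by the Green function \<open>G\<^sub>z\<close>: its columns solve the
  recurrence off the diagonal, the constant Wronskians of \<open>P\<close> and of the functions of the second
  kind \<open>F\<close> produce the unit jump on the diagonal, and Bessel's inequality in \<open>L\<^sup>2(W d\<tau>)\<close> (with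
  \<open>F\<^sub>n(z) = \<integral> P\<^sub>n(x) W(x) / (x - z) d\<tau>\<close> as Fourier coefficients) puts the columns into \<open>\<ell>\<^sup>2\<close>.\<close>

section \<open>Linear algebra in \<open>\<complex>\<^sup>N\<close>\<close>

lemma matrix_vector_mult_nth:
  "((A::'a::semiring_1^'n::finite^'m::finite) *v x) $ i = (\<Sum>j\<in>UNIV. A $ i $ j * x $ j)"
  by (simp add: matrix_vector_mult_def)

lemma matrix_matrix_mult_nth:
  "((A::'a::semiring_1^'n::finite^'m::finite) ** B) $ i $ j = (\<Sum>k\<in>UNIV. A $ i $ k * B $ k $ j)"
  by (simp add: matrix_matrix_mult_def)

lemma matrix_add_rdistrib: "((A::'a::semiring_1^'n::finite^'m::finite) + B) ** C = A ** C + B ** C"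
  by (simp add: vec_eq_iff matrix_matrix_mult_nth algebra_simps sum.distrib)

lemma matrix_diff_rdistrib: "((A::'a::ring_1^'n::finite^'m::finite) - B) ** C = A ** C - B ** C"
  by (simp add: vec_eq_iff matrix_matrix_mult_nth algebra_simps sum_subtractf)

lemma matrix_diff_ldistrib: "(C::'a::ring_1^'n::finite^'m::finite) ** (A - B) = C ** A - C ** B"
  by (simp add: vec_eq_iff matrix_matrix_mult_nth algebra_simps sum_subtractf)

lemma matrix_mul_0_left [simp]: "(0::'a::semiring_1^'n::finite^'m::finite) ** C = 0"
  by (simp add: vec_eq_iff matrix_matrix_mult_nth)

lemma matrix_sum_ldistrib:
  "finite S \<Longrightarrow> (K::'a::semiring_1^'n::finite^'m::finite) ** (\<Sum>i\<in>S. f i) = (\<Sum>i\<in>S. K ** f i)"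
  by (induct S rule: finite_induct) (auto simp: matrix_add_ldistrib)

lemma matrix_sum_rdistrib:
  "finite S \<Longrightarrow> (\<Sum>i\<in>S. f i) ** (K::'a::semiring_1^'n::finite^'m::finite) = (\<Sum>i\<in>S. f i ** K)"
  by (induct S rule: finite_induct) (auto simp: matrix_add_rdistrib)

lemma matrix_sum_vector_mult:
  "finite S \<Longrightarrow> (\<Sum>i\<in>S. (f i::'a::semiring_1^'n::finite^'m::finite)) *v v = (\<Sum>i\<in>S. f i *v v)"
  by (induct S rule: finite_induct) (auto simp: matrix_vector_mult_add_rdistrib)

lemma matrix_uminus_vector_mult: "(- (M::'a::ring_1^'n::finite^'m::finite)) *v v = - (M *v v)"
  by (simp add: vec_eq_iff matrix_vector_mult_nth sum_negf)

lemma vector_scalar_mult_sum: "c *s (\<Sum>k\<in>S. f k) = (\<Sum>k\<in>S. c *s (f k :: 'a::comm_ring^'n))"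
  by (induct S rule: infinite_finite_induct) (auto simp: vector_add_ldistrib)

lemma mat_vector_mult: "mat c *v v = c *s (v::'a::comm_semiring_1^'n::finite)"
  by (simp add: vec_eq_iff matrix_vector_mult_nth mat_def if_distrib[of "\<lambda>a. a * _"] cong: if_cong)

lemma norm_vector_scalar_mult: "norm (c *s (v::complex^'m::finite)) = cmod c * norm v"
  by (simp add: norm_vec_def L2_set_def norm_mult power_mult_distrib
      sum_distrib_left[symmetric] real_sqrt_mult)

lemma matrix_vector_mult_scaleR_complex:
  "(M::complex^'n::finite^'m::finite) *v (r *\<^sub>R v) = r *\<^sub>R (M *v v)"
  by (simp add: vec_eq_iff matrix_vector_mult_nth scaleR_sum_right)

lemma matrix_inv_mult:
  assumes "invertible (M::'a::semiring_1^'n::finite^'n)"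
  shows matrix_mul_inv_right: "M ** matrix_inv M = mat 1"
    and matrix_mul_inv_left: "matrix_inv M ** M = mat 1"
proof -
  from assms obtain A' where "M ** A' = mat 1 \<and> A' ** M = mat 1" by (auto simp: invertible_def)
  hence "M ** matrix_inv M = mat 1 \<and> matrix_inv M ** M = mat 1"
    unfolding matrix_inv_def by (rule someI)
  thus "M ** matrix_inv M = mat 1" "matrix_inv M ** M = mat 1" by auto
qed

lemma matrix_vector_mult_inv [simp]:
  assumes "invertible (M::'a::semiring_1^'n::finite^'n)"
  shows "M *v (matrix_inv M *v v) = v" "matrix_inv M *v (M *v v) = v"
  by (simp_all add: matrix_vector_mul_assoc matrix_inv_mult assms)

lemma matrix_vector_mult_cancel:
  "invertible (M::'a::semiring_1^'n::finite^'n) \<Longrightarrow> M *v x = M *v y \<Longrightarrow> x = y"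
  by (metis matrix_vector_mult_inv(2))

lemma matrix_inv_unique_right:
  "invertible M \<Longrightarrow> M ** X = mat 1 \<Longrightarrow> X = matrix_inv (M::'a::semiring_1^'n::finite^'n)"
  by (metis matrix_mul_inv_left matrix_mul_assoc matrix_mul_lid matrix_mul_rid)

lemma invertible_if_kernel_trivial:
  "(\<And>v. (M::'a::field^'n::finite^'n) *v v = 0 \<Longrightarrow> v = 0) \<Longrightarrow> invertible M"
  by (simp add: invertible_left_inverse matrix_left_invertible_ker)

lemma madj_nth [simp]: "madj M $ i $ j = cnj (M $ j $ i)"
  by (simp add: madj_def)

lemma madj_madj [simp]: "madj (madj M) = M"
  by (simp add: vec_eq_iff)

lemma madj_add: "madj (M + N) = madj M + madj N"
  by (simp add: vec_eq_iff)

lemma madj_diff: "madj (M - N) = madj M - madj N"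
  by (simp add: vec_eq_iff)

lemma madj_mat [simp]: "madj (mat c) = mat (cnj c)"
  by (simp add: vec_eq_iff mat_def)

lemma madj_matrix_mul: "madj (A ** B) = madj B ** madj A"
  by (simp add: vec_eq_iff matrix_matrix_mult_nth mult.commute)

lemma madj_sum: "madj (\<Sum>i\<in>S. f i) = (\<Sum>i\<in>S. madj (f i))"
  by (induct S rule: infinite_finite_induct) (auto simp: madj_add vec_eq_iff)

lemma smat_nth [simp]: "smat c M $ i $ j = c * M $ i $ j"
  by (simp add: smat_def)

lemma madj_smat: "madj (smat c M) = smat (cnj c) (madj M)"
  by (simp add: vec_eq_iff)

lemma smat_eq_mat_mult: "smat c M = mat c ** M"
  by (simp add: vec_eq_iff matrix_matrix_mult_nth mat_def if_distrib[of "\<lambda>a. a * _"] cong: if_cong)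

lemma smat_mult_left: "smat c A ** B = smat c (A ** B)"
  by (simp add: vec_eq_iff matrix_matrix_mult_nth sum_distrib_left mult.assoc)

lemma smat_mult_right: "A ** smat c B = smat c (A ** B)"
  by (simp add: vec_eq_iff matrix_matrix_mult_nth sum_distrib_left mult.left_commute)

lemma smat_smat: "smat a (smat b M) = smat (a * b) M"
  by (simp add: vec_eq_iff mult.assoc)

lemma smat_add: "smat c (M + N) = smat c M + smat c N"
  by (simp add: vec_eq_iff algebra_simps)

lemma smat_diff: "smat c (M - N) = smat c M - smat c N"
  by (simp add: vec_eq_iff algebra_simps)

lemma smat_add_left: "smat (a + b) M = smat a M + smat b M"
  by (simp add: vec_eq_iff algebra_simps)

lemma smat_uminus_left: "smat (- c) M = - smat c M"
  by (simp add: vec_eq_iff)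

lemma smat_one [simp]: "smat 1 M = M"
  by (simp add: vec_eq_iff)

lemma smat_sum: "smat c (\<Sum>i\<in>S. f i) = (\<Sum>i\<in>S. smat c (f i))"
  by (induct S rule: infinite_finite_induct) (auto simp: smat_add vec_eq_iff)

lemma smat_vector_mult: "smat c M *v v = c *s (M *v v)"
  by (simp add: vec_eq_iff matrix_vector_mult_nth sum_distrib_left mult.assoc)

lemma invertible_madj: "invertible M \<Longrightarrow> invertible (madj M)"
  unfolding invertible_def by (metis madj_matrix_mul madj_mat complex_cnj_one)

lemma madj_matrix_inv: "invertible M \<Longrightarrow> madj (matrix_inv M) = matrix_inv (madj M)"
  by (metis matrix_mul_inv_left matrix_inv_unique_right invertible_madj madj_matrix_mul madj_mat
      complex_cnj_one)

lemmas matrix_distribs = matrix_add_ldistrib matrix_add_rdistrib matrix_diff_rdistrib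
  matrix_diff_ldistrib smat_mult_left smat_mult_right smat_add smat_diff
  madj_add madj_diff madj_smat madj_matrix_mul

lemma cinner_add_left: "cinner (u + v) w = cinner u w + cinner v w"
  by (simp add: cinner_def algebra_simps sum.distrib)

lemma cinner_add_right: "cinner w (u + v) = cinner w u + cinner w v"
  by (simp add: cinner_def algebra_simps sum.distrib)

lemma cinner_diff_left: "cinner (u - v) w = cinner u w - cinner v w"
  by (simp add: cinner_def algebra_simps sum_subtractf)

lemma cinner_diff_right: "cinner w (u - v) = cinner w u - cinner w v"
  by (simp add: cinner_def algebra_simps sum_subtractf)

lemma cinner_scale_left: "cinner (c *s u) w = c * cinner u w"
  by (simp add: cinner_def sum_distrib_left mult.assoc)

lemma cinner_zero_left [simp]: "cinner 0 w = 0"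
  by (simp add: cinner_def)

lemma cinner_zero_right [simp]: "cinner w 0 = 0"
  by (simp add: cinner_def)

lemma cinner_sum_left: "cinner (\<Sum>i\<in>S. f i) w = (\<Sum>i\<in>S. cinner (f i) w)"
  by (induct S rule: infinite_finite_induct) (auto simp: cinner_add_left)

lemma cinner_commute: "cinner v u = cnj (cinner u v)"
  by (simp add: cinner_def mult.commute)

lemma cinner_madj: "cinner (M *v u) v = cinner u (madj M *v v)"
proof -
  have "cinner (M *v u) v = (\<Sum>i\<in>UNIV. \<Sum>j\<in>UNIV. M $ i $ j * u $ j * cnj (v $ i))"
    by (simp add: cinner_def matrix_vector_mult_nth sum_distrib_right)
  also have "\<dots> = (\<Sum>j\<in>UNIV. \<Sum>i\<in>UNIV. M $ i $ j * u $ j * cnj (v $ i))"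
    by (rule sum.swap)
  also have "\<dots> = cinner u (madj M *v v)"
    by (simp add: cinner_def matrix_vector_mult_nth sum_distrib_left algebra_simps)
  finally show ?thesis .
qed

lemma cinner_madj_left: "cinner (madj M *v u) v = cinner u (M *v v)"
  using cinner_madj[of "madj M"] by simp

lemma cinner_hermitian: "hermitian M \<Longrightarrow> cinner (M *v u) v = cinner u (M *v v)"
  by (simp add: cinner_madj hermitian_def)

lemma cinner_self: "cinner v v = of_real ((norm v)\<^sup>2)"
  by (simp add: cinner_def norm_vec_def L2_set_def sum_nonneg complex_mult_cnj cmod_power2)

lemma cinner_self_eq_zero: "cinner v v = 0 \<longleftrightarrow> v = 0"
  by (simp add: cinner_self)

lemma norm_cinner_le: "cmod (cinner u v) \<le> norm u * norm v"
proof -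
  have "cmod (cinner u v) \<le> (\<Sum>i\<in>UNIV. cmod (u $ i) * cmod (v $ i))"
    unfolding cinner_def by (rule order_trans[OF norm_sum]) (simp add: norm_mult)
  also have "\<dots> \<le> L2_set (\<lambda>i. cmod (u $ i)) UNIV * L2_set (\<lambda>i. cmod (v $ i)) UNIV"
    using L2_set_mult_ineq[where f="\<lambda>i. cmod (u $ i)" and A=UNIV and g="\<lambda>i. cmod (v $ i)"] by simp
  finally show ?thesis by (simp add: norm_vec_def)
qed

section \<open>The Jacobi operator on \<open>\<ell>\<^sup>2\<close>\<close>

lemma l2_add: "U \<in> l2 \<Longrightarrow> V \<in> l2 \<Longrightarrow> (\<lambda>n. U n + V n) \<in> l2"
proof -
  assume "U \<in> l2" "V \<in> l2"
  hence s: "summable (\<lambda>n. 2 * (norm (U n))\<^sup>2 + 2 * (norm (V n))\<^sup>2)"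
    by (auto simp: l2_def intro: summable_add summable_mult)
  have "(norm (U n + V n))\<^sup>2 \<le> 2 * (norm (U n))\<^sup>2 + 2 * (norm (V n))\<^sup>2" for n
  proof -
    have "(norm (U n + V n))\<^sup>2 \<le> (norm (U n) + norm (V n))\<^sup>2"
      by (rule power_mono[OF norm_triangle_ineq]) simp
    also have "\<dots> \<le> 2 * (norm (U n))\<^sup>2 + 2 * (norm (V n))\<^sup>2"
      using sum_squares_bound[of "norm (U n)" "norm (V n)"] by (simp add: power2_sum)
    finally show ?thesis .
  qed
  thus ?thesis unfolding l2_def by (auto intro: summable_comparison_test'[OF s])
qed

lemma l2_scale: "U \<in> l2 \<Longrightarrow> (\<lambda>n. c *s U n) \<in> l2"
  by (simp add: l2_def norm_vector_scalar_mult power_mult_distrib summable_mult)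

lemma l2_lincomb: "U \<in> l2 \<Longrightarrow> V \<in> l2 \<Longrightarrow> (\<lambda>n. c *s U n + a *s V n) \<in> l2"
  by (intro l2_add l2_scale)

lemma l2_diff: "U \<in> l2 \<Longrightarrow> V \<in> l2 \<Longrightarrow> (\<lambda>n. U n - V n) \<in> l2"
  using l2_lincomb[of U V 1 "-1"] by (simp add: vector_sneg_minus1[symmetric])

lemma l2_sum: "(\<And>k. k \<in> S \<Longrightarrow> X k \<in> l2) \<Longrightarrow> (\<lambda>n. \<Sum>k\<in>S. X k n) \<in> l2"
proof (induct S rule: infinite_finite_induct)
  case (insert x F) thus ?case using l2_add[of "X x" "\<lambda>n. \<Sum>k\<in>F. X k n"] by simp
qed (simp_all add: l2_def)

lemma l2_eventually_eq: "U \<in> l2 \<Longrightarrow> \<forall>n\<ge>M. V n = U n \<Longrightarrow> V \<in> l2"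
proof -
  assume "U \<in> l2" "\<forall>n\<ge>M. V n = U n"
  hence "eventually (\<lambda>n. (norm (V n))\<^sup>2 = (norm (U n))\<^sup>2) sequentially"
    by (auto simp: eventually_sequentially intro!: exI[of _ M])
  from summable_cong[OF this] show ?thesis using \<open>U \<in> l2\<close> unfolding l2_def by simp
qed

lemma finseq_l2: "V \<in> finseq \<Longrightarrow> V \<in> l2"
  unfolding finseq_def using l2_eventually_eq[of "\<lambda>n. 0"] by (auto simp: l2_def)

lemma l2_inner_finite_support:
  "\<forall>n\<ge>M. V n = 0 \<Longrightarrow> l2_inner V U = (\<Sum>n<M. cinner (V n) (U n))"
  unfolding l2_inner_def by (rule suminf_finite) auto

lemma finseq_inner_eq_imp_eq:
  fixes Y Y' :: "'n::finite seq"
  assumes "\<And>V. V \<in> finseq \<Longrightarrow> l2_inner V Y = l2_inner V Y'"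
  shows "Y = Y'"
proof
  fix n
  define V where "V = (\<lambda>k. if k = n then Y n - Y' n else 0)"
  have V: "\<forall>k\<ge>Suc n. V k = 0" by (simp add: V_def)
  have "cinner (V k) (X k) = (if k = n then cinner (Y n - Y' n) (X k) else 0)" for k and X :: "'n seq"
    by (simp add: V_def)
  hence "l2_inner V X = cinner (Y n - Y' n) (X n)" for X :: "'n seq"
    by (simp add: l2_inner_finite_support[OF V])
  moreover have "l2_inner V Y = l2_inner V Y'"
    using V by (intro assms) (auto simp: finseq_def)
  ultimately have "cinner (Y n - Y' n) (Y n - Y' n) = 0" by (simp add: cinner_diff_right)
  thus "Y n = Y' n" by (simp add: cinner_self_eq_zero)
qed

lemma jacobi_0 [simp]: "jacobi A B V 0 = A 0 *v V 1 + B 0 *v V 0"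
  by (simp add: jacobi_def)

lemma jacobi_Suc [simp]:
  "jacobi A B V (Suc n) = A (Suc n) *v V (Suc (Suc n)) + B (Suc n) *v V (Suc n) + madj (A n) *v V n"
  by (simp add: jacobi_def)

lemma jacobi_local:
  "U (n - 1) = V (n - 1) \<Longrightarrow> U n = V n \<Longrightarrow> U (Suc n) = V (Suc n) \<Longrightarrow> jacobi A B U n = jacobi A B V n"
  by (simp add: jacobi_def)

lemma jacobi_lincomb:
  "jacobi A B (\<lambda>n. c *s U n + a *s V n) n = c *s jacobi A B U n + a *s jacobi A B V n"
  by (simp add: jacobi_def matrix_vector_right_distrib vector_scalar_commute algebra_simps
      vector_add_ldistrib)

lemma jacobi_diff: "jacobi A B (\<lambda>n. U n - V n) n = jacobi A B U n - jacobi A B V n"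
  by (simp add: jacobi_def matrix_vector_mult_diff_distrib algebra_simps)

lemma jacobi_sum: "jacobi A B (\<lambda>n. \<Sum>k\<in>S. X k n) m = (\<Sum>k\<in>S. jacobi A B (X k) m)"
proof (induct S rule: infinite_finite_induct)
  case (insert x F)
  thus ?case using jacobi_lincomb[of A B 1 "X x" 1 "\<lambda>n. \<Sum>k\<in>F. X k n" m] by simp
qed (simp_all add: jacobi_def)

locale jacobi_matrix =
  fixes A B :: "nat \<Rightarrow> complex^'n::finite^'n"
  assumes invertible_A: "\<And>n. invertible (A n)" and hermitian_B: "\<And>n. hermitian (B n)"
begin

abbreviation J where "J \<equiv> jacobi A B"

lemma jacobi_green:
  "(\<Sum>n\<le>M. cinner (J V n) (U n)) - (\<Sum>n\<le>M. cinner (V n) (J U n))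
     = cinner (A M *v V (Suc M)) (U M) - cinner (V M) (A M *v U (Suc M))"
proof (induct M)
  case 0
  show ?case using cinner_hermitian[OF hermitian_B[of 0], of "V 0" "U 0"]
    by (simp add: cinner_add_left cinner_add_right)
next
  case (Suc M)
  thus ?case
    using cinner_madj_left[of "A M" "V M" "U (Suc M)"] cinner_madj[of "A M" "V (Suc M)" "U M"]
      cinner_hermitian[OF hermitian_B, of "Suc M" "V (Suc M)" "U (Suc M)"]
    by (simp add: cinner_add_left cinner_add_right algebra_simps)
qed

lemma jacobi_symmetric_finseq:
  assumes "V \<in> finseq"
  shows "l2_inner (J V) U = l2_inner V (J U)"
proof -
  obtain M where M: "\<forall>n\<ge>M. V n = 0" using assms by (auto simp: finseq_def)
  have "l2_inner (J V) U = (\<Sum>n\<le>M. cinner (J V n) (U n))"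
    unfolding l2_inner_def by (rule suminf_finite) (use M in \<open>auto simp: jacobi_def\<close>)
  moreover have "l2_inner V (J U) = (\<Sum>n\<le>M. cinner (V n) (J U n))"
    using l2_inner_finite_support[of "Suc M" V] M by (simp add: lessThan_Suc_atMost)
  ultimately show ?thesis using jacobi_green[where M=M and V=V and U=U] M by simp
qed

lemma jacobi_adj_witness_eq:
  "\<forall>V\<in>finseq. l2_inner (J V) U = l2_inner V Y \<Longrightarrow> Y = J U"
  by (rule finseq_inner_eq_imp_eq) (simp add: jacobi_symmetric_finseq)

lemma jacobi_adj_dom_eq: "jacobi_adj_dom A B = {U \<in> l2. J U \<in> l2}"
  unfolding jacobi_adj_dom_def using jacobi_adj_witness_eq jacobi_symmetric_finseq by blast

lemma jacobi_adj_eq: "J U \<in> l2 \<Longrightarrow> jacobi_adj A B U = J U"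
  unfolding jacobi_adj_def
  by (rule the_equality) (use jacobi_adj_witness_eq jacobi_symmetric_finseq in blast)+

lemma Im_jacobi_quadratic_form:
  assumes "\<forall>n\<ge>M. X n = 0"
  shows "Im (\<Sum>n<M. cinner (J X n) (X n)) = 0"
proof -
  let ?S = "\<Sum>n<M. cinner (J X n) (X n)"
  have "?S = (\<Sum>n<M. cinner (X n) (J X n))"
    using jacobi_green[where M=M and V=X and U=X] assms by (simp add: lessThan_Suc_atMost[symmetric])
  also have "\<dots> = cnj ?S" by (simp add: cinner_commute[of "X _"])
  finally have "Im ?S = Im (cnj ?S)" by (rule arg_cong)
  thus ?thesis by (simp add: sum_negf)
qed

lemma jacobi_energy_ineq:
  assumes X0: "\<forall>n\<ge>M. X n = 0"
  shows "(Im z)\<^sup>2 * (\<Sum>n<M. (norm (X n))\<^sup>2) \<le> (\<Sum>n<M. (norm (J X n - z *s X n))\<^sup>2)"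
proof -
  define T where "T = (\<Sum>n<M. (norm (X n))\<^sup>2)"
  define G where "G = (\<Sum>n<M. (norm (J X n - z *s X n))\<^sup>2)"
  have "(\<Sum>n<M. cinner (J X n - z *s X n) (X n)) = (\<Sum>n<M. cinner (J X n) (X n)) - z * of_real T"
    unfolding T_def by (simp add: cinner_diff_left cinner_scale_left cinner_self sum_subtractf
        sum_distrib_left)
  hence "\<bar>Im z\<bar> * T = \<bar>Im (\<Sum>n<M. cinner (J X n - z *s X n) (X n))\<bar>"
    using Im_jacobi_quadratic_form[OF X0] by (simp add: abs_mult T_def sum_nonneg)
  also have "\<dots> \<le> (\<Sum>n<M. norm (J X n - z *s X n) * norm (X n))"
    by (rule order_trans[OF abs_Im_le_cmod order_trans[OF norm_sum]]) (intro sum_mono norm_cinner_le)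
  also have "\<dots> \<le> sqrt G * sqrt T"
    using L2_set_mult_ineq[where f="\<lambda>n. norm (J X n - z *s X n)" and A="{..<M}"
        and g="\<lambda>n. norm (X n)"] by (simp add: L2_set_def G_def T_def)
  finally have ineq: "\<bar>Im z\<bar> * T \<le> sqrt G * sqrt T" .
  have "T \<ge> 0" "G \<ge> 0" unfolding T_def G_def by (simp_all add: sum_nonneg)
  show ?thesis
  proof (cases "T = 0")
    case False
    with \<open>T \<ge> 0\<close> have "\<bar>Im z\<bar> * sqrt T * sqrt T \<le> sqrt G * sqrt T"
      using ineq by (simp add: mult.assoc)
    with \<open>T \<ge> 0\<close> \<open>T \<noteq> 0\<close> have "\<bar>Im z\<bar> * sqrt T \<le> sqrt G"
      by (simp add: mult_le_cancel_right)
    hence "(\<bar>Im z\<bar> * sqrt T)\<^sup>2 \<le> G"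
      using \<open>T \<ge> 0\<close> \<open>G \<ge> 0\<close> by (metis abs_ge_zero power_mono real_sqrt_ge_zero
          real_sqrt_pow2 zero_le_mult_iff)
    thus ?thesis using \<open>T \<ge> 0\<close> by (simp add: power_mult_distrib T_def G_def)
  qed (simp add: T_def G_def sum_nonneg)
qed

end

lemma pointwise_bounded_imp_convergent_subseq:
  fixes X :: "nat \<Rightarrow> nat \<Rightarrow> 'a::{heine_borel,real_normed_vector}"
  assumes bound: "\<And>j k. norm (X j k) \<le> C k"
  obtains \<sigma> U where "strict_mono \<sigma>" "\<And>k. (\<lambda>j. X (\<sigma> j) k) \<longlonglongrightarrow> U k"
proof -
  interpret S: subseqs "\<lambda>k s. convergent (\<lambda>j. X (s j) k)"
  proof
    fix k and s :: "nat \<Rightarrow> nat"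
    have "bounded (range (\<lambda>j. X (s j) k))"
      unfolding bounded_iff using bound by blast
    then obtain l r where "strict_mono r" "((\<lambda>j. X (s j) k) \<circ> r) \<longlonglongrightarrow> l"
      using bounded_imp_convergent_subsequence by blast
    thus "\<exists>r'. strict_mono r' \<and> convergent (\<lambda>j. X ((s \<circ> r') j) k)"
      by (auto simp: convergent_def o_def)
  qed
  have "convergent (\<lambda>j. X (S.diagseq j) k)" for k
  proof -
    have "convergent (\<lambda>j. X ((S.diagseq \<circ> (+) (Suc k)) j) k)"
    proof (rule S.diagseq_holds)
      fix r s n assume "strict_mono (r::nat\<Rightarrow>nat)" "convergent (\<lambda>j. X (s j) n)"
      thus "convergent (\<lambda>j. X ((s \<circ> r) j) n)"
        using convergent_subseq_convergent[of "\<lambda>j. X (s j) n" r] by (simp add: o_def)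
    qed
    then obtain l where "(\<lambda>j. X (S.diagseq (j + Suc k)) k) \<longlonglongrightarrow> l"
      by (auto simp: convergent_def o_def add.commute)
    hence "(\<lambda>j. X (S.diagseq j) k) \<longlonglongrightarrow> l"
      by (rule LIMSEQ_offset)
    thus ?thesis unfolding convergent_def by blast
  qed
  thus ?thesis
    using that[OF S.subseq_diagseq, of "\<lambda>k. lim (\<lambda>j. X (S.diagseq j) k)"]
    by (simp add: convergent_LIMSEQ_iff)
qed

context jacobi_matrix
begin

fun forward_solution :: "complex \<Rightarrow> 'n seq \<Rightarrow> 'n seq" where
  "forward_solution z F 0 = 0"
| "forward_solution z F (Suc 0) = matrix_inv (A 0) *v F 0"
| "forward_solution z F (Suc (Suc n)) = matrix_inv (A (Suc n)) *v
      (F (Suc n) - B (Suc n) *v forward_solution z F (Suc n) + z *s forward_solution z F (Suc n)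
       - madj (A n) *v forward_solution z F n)"

lemma forward_solution_eq: "J (forward_solution z F) n - z *s forward_solution z F n = F n"
  by (cases n) (simp_all add: invertible_A)

lemma tendsto_jacobi:
  assumes "\<And>n. (\<lambda>j. X j n) \<longlonglongrightarrow> U n"
  shows "(\<lambda>j. J (X j) n - z *s X j n) \<longlonglongrightarrow> J U n - z *s U n"
proof -
  have t: "(\<lambda>j. M *v X j k) \<longlonglongrightarrow> M *v U k" for M :: "complex^'n^'n" and k
    by (rule bounded_linear.tendsto[OF matrix_vector_mul_bounded_linear assms])
  show ?thesis
    unfolding jacobi_def mat_vector_mult[symmetric] by (intro tendsto_intros t) (auto intro: t)
qed

end

locale jacobi_polys = jacobi_matrix A B for A B :: "nat \<Rightarrow> complex^'n::finite^'n" +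
  fixes P :: "nat \<Rightarrow> complex \<Rightarrow> complex^'n^'n"
  assumes three_term: "three_term P A B" and invertible_P0: "\<And>w. invertible (P 0 w)"
begin

lemma P_0_recurrence: "smat w (P 0 w) = A 0 ** P 1 w + B 0 ** P 0 w"
  using three_term by (simp add: three_term_def)

lemma P_Suc_recurrence:
  "smat w (P (Suc n) w) = A (Suc n) ** P (Suc (Suc n)) w + B (Suc n) ** P (Suc n) w + madj (A n) ** P n w"
  using three_term by (simp add: three_term_def)

lemma jacobi_P: "J (\<lambda>n. P n w *v c) n = w *s (P n w *v c)"
proof (cases n)
  case 0
  thus ?thesis using arg_cong[OF P_0_recurrence, of "\<lambda>M. M *v c"]
    by (simp add: smat_vector_mult matrix_vector_mult_add_rdistrib matrix_vector_mul_assoc)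
next
  case (Suc m)
  thus ?thesis using arg_cong[OF P_Suc_recurrence[of w m], of "\<lambda>M. M *v c"]
    by (simp add: smat_vector_mult matrix_vector_mult_add_rdistrib matrix_vector_mul_assoc)
qed

lemma eigensequence_eq_P:
  assumes eigen: "\<And>n. J U n = w *s U n"
  shows "U n = P n w *v (matrix_inv (P 0 w) *v U 0)"
proof -
  define c where "c = matrix_inv (P 0 w) *v U 0"
  have step: "U (Suc n) = P (Suc n) w *v c"
    if "U n = P n w *v c" "n > 0 \<Longrightarrow> U (n - 1) = P (n - 1) w *v c" for n
  proof -
    have "J U n - A n *v U (Suc n) = J (\<lambda>k. P k w *v c) n - A n *v (P (Suc n) w *v c)"
      using that by (cases n) simp_all
    moreover have "J U n = J (\<lambda>k. P k w *v c) n"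
      using eigen[of n] jacobi_P[of w c n] that(1) by simp
    ultimately have "A n *v U (Suc n) = A n *v (P (Suc n) w *v c)" by simp
    thus ?thesis by (rule matrix_vector_mult_cancel[OF invertible_A])
  qed
  have "U n = P n w *v c \<and> U (Suc n) = P (Suc n) w *v c" for n
  proof (induct n)
    case 0
    have "U 0 = P 0 w *v c" unfolding c_def by (simp add: invertible_P0)
    thus ?case using step[of 0] by simp
  next
    case (Suc n)
    thus ?case using step[of "Suc n"] by simp
  qed
  thus ?thesis unfolding c_def by blast
qed

lemma invertible_P:
  assumes "Im z \<noteq> 0"
  shows "invertible (P M z)"
proof (cases M)
  case 0 thus ?thesis using invertible_P0 by simp
next
  case (Suc m)
  show ?thesis
  proof (rule invertible_if_kernel_trivial)
    fix a assume a: "P M z *v a = 0"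
    define X where "X = (\<lambda>n. if n < M then P n z *v a else 0)"
    have "J X n - z *s X n = 0" if "n < M" for n
    proof -
      have "X (Suc n) = P (Suc n) z *v a"
        using that a by (cases "Suc n = M") (auto simp: X_def)
      hence "J X n = J (\<lambda>n. P n z *v a) n"
        by (intro jacobi_local) (use that in \<open>auto simp: X_def\<close>)
      thus ?thesis using that jacobi_P[of z a n] by (simp add: X_def)
    qed
    hence "(Im z)\<^sup>2 * (\<Sum>n<M. (norm (X n))\<^sup>2) \<le> 0"
      using jacobi_energy_ineq[of M X z] by (simp add: X_def)
    hence "(\<Sum>n<M. (norm (X n))\<^sup>2) = 0"
      using assms by (simp add: mult_le_0_iff sum_nonneg order.antisym)
    hence "P 0 z *v a = 0" using Suc by (subst (asm) sum_nonneg_eq_0_iff) (auto simp: X_def)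
    thus "a = 0" using matrix_vector_mult_cancel[OF invertible_P0, of z a 0] by simp
  qed
qed

text \<open>Subtracting the right multiple of \<open>P\<^sub>n(z)\<close> from the forward solution makes it vanish
  at \<open>M\<close>; cut off there, it solves \<open>(J - z) U = F\<close> on \<open>[0, M)\<close> and has finite support.\<close>
definition truncated_solution :: "complex \<Rightarrow> 'n seq \<Rightarrow> nat \<Rightarrow> 'n seq" where
  "truncated_solution z F M n =
    (if n < M then forward_solution z F n - P n z *v (matrix_inv (P M z) *v forward_solution z F M)
     else 0)"

lemma truncated_solution_eq:
  assumes "Im z \<noteq> 0" "n < M"
  shows "J (truncated_solution z F M) n - z *s truncated_solution z F M n = F n"
proof -
  define Y where "Y = (\<lambda>n. forward_solution z F n - P n z *v (matrix_inv (P M z) *v forward_solution z F M))"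
  have "Y M = 0" using invertible_P[OF assms(1)] by (simp add: Y_def)
  hence "truncated_solution z F M (Suc n) = Y (Suc n)"
    using assms by (cases "Suc n = M") (auto simp: truncated_solution_def Y_def)
  hence "J (truncated_solution z F M) n = J Y n"
    by (intro jacobi_local) (use assms in \<open>auto simp: truncated_solution_def Y_def\<close>)
  moreover have "J Y n - z *s Y n = F n"
    unfolding Y_def jacobi_diff jacobi_P using forward_solution_eq[of z F n]
    by (simp add: vector_ssub_ldistrib algebra_simps)
  ultimately show ?thesis using assms by (simp add: truncated_solution_def Y_def)
qed

lemma truncated_solution_bound:
  assumes z: "Im z \<noteq> 0" and F: "F \<in> l2"
  shows "(Im z)\<^sup>2 * (\<Sum>n<L. (norm (truncated_solution z F M n))\<^sup>2) \<le> (\<Sum>n. (norm (F n))\<^sup>2)"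
proof -
  let ?X = "truncated_solution z F M"
  have "(\<Sum>n<L. (norm (?X n))\<^sup>2) \<le> (\<Sum>n<max L M. (norm (?X n))\<^sup>2)"
    by (rule sum_mono2) auto
  also have "\<dots> = (\<Sum>n<M. (norm (?X n))\<^sup>2)"
    by (rule sum.mono_neutral_right) (auto simp: truncated_solution_def)
  finally have "(Im z)\<^sup>2 * (\<Sum>n<L. (norm (?X n))\<^sup>2) \<le> (Im z)\<^sup>2 * (\<Sum>n<M. (norm (?X n))\<^sup>2)"
    by (simp add: mult_left_mono)
  also have "\<dots> \<le> (\<Sum>n<M. (norm (F n))\<^sup>2)"
    using jacobi_energy_ineq[of M ?X z] truncated_solution_eq[OF z]
    by (simp add: truncated_solution_def)
  also have "\<dots> \<le> (\<Sum>n. (norm (F n))\<^sup>2)"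
    using F by (intro sum_le_suminf) (auto simp: l2_def)
  finally show ?thesis .
qed

lemma exists_l2_solution:
  assumes z: "Im z \<noteq> 0" and F: "F \<in> l2"
  obtains U where "U \<in> l2" "\<And>n. J U n - z *s U n = F n"
    "(Im z)\<^sup>2 * (\<Sum>n. (norm (U n))\<^sup>2) \<le> (\<Sum>n. (norm (F n))\<^sup>2)"
proof -
  define K where "K = (\<Sum>n. (norm (F n))\<^sup>2) / (Im z)\<^sup>2"
  have "(Im z)\<^sup>2 > 0" using z by simp
  hence bound: "(\<Sum>n<L. (norm (truncated_solution z F M n))\<^sup>2) \<le> K" for L M
    using truncated_solution_bound[OF z F, where L=L and M=M] by (simp add: K_def field_simps)
  have norm_bound: "norm (truncated_solution z F M n) \<le> sqrt K" for M n
    using member_le_sum[of n "{..<Suc n}" "\<lambda>n. (norm (truncated_solution z F M n))\<^sup>2"]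
      bound[where L="Suc n" and M=M] by (simp add: real_le_rsqrt)
  obtain \<sigma> U where \<sigma>: "strict_mono \<sigma>"
    and lim: "\<And>n. (\<lambda>j. truncated_solution z F (\<sigma> j) n) \<longlonglongrightarrow> U n"
    using pointwise_bounded_imp_convergent_subseq[where X="\<lambda>j. truncated_solution z F j", OF norm_bound]
    by blast
  have eqn: "J U n - z *s U n = F n" for n
  proof (rule LIMSEQ_unique[OF tendsto_jacobi[OF lim]])
    have "J (truncated_solution z F (\<sigma> j)) n - z *s truncated_solution z F (\<sigma> j) n = F n"
      if "j \<ge> Suc n" for j
      using truncated_solution_eq[OF z] seq_suble[OF \<sigma>, of j] that by simp
    thus "(\<lambda>j. J (truncated_solution z F (\<sigma> j)) n - z *s truncated_solution z F (\<sigma> j) n) \<longlonglongrightarrow> F n"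
      by (intro tendsto_eventually eventually_sequentiallyI)
  qed
  have partial: "(\<Sum>n<L. (norm (U n))\<^sup>2) \<le> K" for L
  proof (rule LIMSEQ_le_const2)
    show "(\<lambda>j. \<Sum>n<L. (norm (truncated_solution z F (\<sigma> j) n))\<^sup>2) \<longlonglongrightarrow> (\<Sum>n<L. (norm (U n))\<^sup>2)"
      by (intro tendsto_intros lim)
  qed (use bound in blast)
  have "summable (\<lambda>n. (norm (U n))\<^sup>2)"
    by (rule summableI_nonneg_bounded[OF _ partial]) simp
  moreover from this have "(Im z)\<^sup>2 * (\<Sum>n. (norm (U n))\<^sup>2) \<le> (\<Sum>n. (norm (F n))\<^sup>2)"
    using suminf_le_const[OF _ partial] \<open>(Im z)\<^sup>2 > 0\<close> by (simp add: K_def field_simps)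
  ultimately show ?thesis using that eqn by (simp add: l2_def)
qed

end

locale jacobi_limit_point = jacobi_polys A B P for A B :: "nat \<Rightarrow> complex^'n::finite^'n" and P +
  fixes z :: complex
  assumes nonreal: "Im z \<noteq> 0"
    and P_not_l2: "\<And>v. v \<noteq> 0 \<Longrightarrow> \<not> summable (\<lambda>n. (norm (P n z *v v))\<^sup>2)"
begin

lemma l2_eigensequence_eq_0:
  assumes "U \<in> l2" "\<And>n. J U n = z *s U n"
  shows "U = (\<lambda>n. 0)"
proof -
  define c where "c = matrix_inv (P 0 z) *v U 0"
  have U: "U = (\<lambda>n. P n z *v c)"
    unfolding c_def by (rule ext) (rule eigensequence_eq_P[OF assms(2)])
  hence "summable (\<lambda>n. (norm (P n z *v c))\<^sup>2)" using assms(1) by (simp add: l2_def)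
  hence "c = 0" using P_not_l2 by blast
  thus ?thesis by (simp add: U)
qed

lemma l2_solution_unique:
  assumes "U \<in> l2" "\<forall>n. J U n - z *s U n = F n" "U' \<in> l2" "\<forall>n. J U' n - z *s U' n = F n"
  shows "U = U'"
proof -
  have "J (\<lambda>n. U n - U' n) n = z *s (U n - U' n)" for n
    using assms(2,4)[rule_format, of n] by (simp add: jacobi_diff vector_ssub_ldistrib algebra_simps)
  hence "(\<lambda>n. U n - U' n) = (\<lambda>n. 0)"
    using l2_eigensequence_eq_0 l2_diff[OF assms(1,3)] by blast
  thus ?thesis by (simp add: fun_eq_iff)
qed

definition resolvent :: "'n seq \<Rightarrow> 'n seq" where
  "resolvent F = (if F \<in> l2 then THE U. U \<in> l2 \<and> (\<forall>n. J U n - z *s U n = F n) else (\<lambda>n. 0))"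

lemma resolvent_eqI:
  assumes "F \<in> l2" "U \<in> l2" "\<forall>n. J U n - z *s U n = F n"
  shows "resolvent F = U"
proof -
  have "(THE U. U \<in> l2 \<and> (\<forall>n. J U n - z *s U n = F n)) = U"
    by (rule the_equality) (use assms l2_solution_unique in blast)+
  thus ?thesis using assms(1) by (simp add: resolvent_def)
qed

lemma resolvent_solves:
  assumes F: "F \<in> l2"
  shows "resolvent F \<in> l2" "\<And>n. J (resolvent F) n - z *s resolvent F n = F n"
    "(Im z)\<^sup>2 * (\<Sum>n. (norm (resolvent F n))\<^sup>2) \<le> (\<Sum>n. (norm (F n))\<^sup>2)"
proof -
  obtain U where "U \<in> l2" "\<And>n. J U n - z *s U n = F n"
    "(Im z)\<^sup>2 * (\<Sum>n. (norm (U n))\<^sup>2) \<le> (\<Sum>n. (norm (F n))\<^sup>2)"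
    using exists_l2_solution[OF nonreal F] by blast
  with resolvent_eqI[OF F] show "resolvent F \<in> l2" "\<And>n. J (resolvent F) n - z *s resolvent F n = F n"
    "(Im z)\<^sup>2 * (\<Sum>n. (norm (resolvent F n))\<^sup>2) \<le> (\<Sum>n. (norm (F n))\<^sup>2)"
    by auto
qed

lemma jacobi_resolvent: "F \<in> l2 \<Longrightarrow> J (resolvent F) = (\<lambda>n. F n + z *s resolvent F n)"
  using resolvent_solves(2) by (simp add: fun_eq_iff diff_eq_eq)

lemma resolvent_lincomb:
  assumes F: "F \<in> l2" and H: "H \<in> l2"
  shows "resolvent (\<lambda>n. c *s F n + a *s H n) = (\<lambda>n. c *s resolvent F n + a *s resolvent H n)"
proof (rule resolvent_eqI)
  show "(\<lambda>n. c *s F n + a *s H n) \<in> l2" "(\<lambda>n. c *s resolvent F n + a *s resolvent H n) \<in> l2"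
    using F H by (simp_all add: l2_lincomb resolvent_solves)
  show "\<forall>n. J (\<lambda>n. c *s resolvent F n + a *s resolvent H n) n
      - z *s (c *s resolvent F n + a *s resolvent H n) = c *s F n + a *s H n"
    unfolding jacobi_lincomb jacobi_resolvent[OF F] jacobi_resolvent[OF H]
    by (simp add: vector_add_ldistrib mult.commute)
qed

lemma resolvent_bound:
  assumes F: "F \<in> l2"
  shows "l2_norm (resolvent F) \<le> (1 / \<bar>Im z\<bar>) * l2_norm F"
proof -
  have "(\<Sum>n. (norm (resolvent F n))\<^sup>2) \<le> (\<Sum>n. (norm (F n))\<^sup>2) / (Im z)\<^sup>2"
    using resolvent_solves(3)[OF F] nonreal by (simp add: field_simps)
  hence "sqrt (\<Sum>n. (norm (resolvent F n))\<^sup>2) \<le> sqrt ((\<Sum>n. (norm (F n))\<^sup>2) / (Im z)\<^sup>2)"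
    by (rule real_sqrt_le_mono)
  thus ?thesis by (simp add: l2_norm_def real_sqrt_divide)
qed

lemma resolvent_in_jacobi_adj_dom:
  assumes F: "F \<in> l2"
  shows "resolvent F \<in> jacobi_adj_dom A B"
    and "(\<lambda>n. jacobi_adj A B (resolvent F) n - z *s resolvent F n) = F"
proof -
  have "J (resolvent F) \<in> l2"
    using F by (simp add: jacobi_resolvent l2_add l2_scale resolvent_solves)
  thus "resolvent F \<in> jacobi_adj_dom A B"
    "(\<lambda>n. jacobi_adj A B (resolvent F) n - z *s resolvent F n) = F"
    using resolvent_solves[OF F] by (simp_all add: jacobi_adj_dom_eq jacobi_adj_eq)
qed

lemma resolvent_jacobi_adj:
  assumes "U \<in> jacobi_adj_dom A B"
  shows "resolvent (\<lambda>n. jacobi_adj A B U n - z *s U n) = U"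
proof -
  have U: "U \<in> l2" "J U \<in> l2" using assms by (auto simp: jacobi_adj_dom_eq)
  hence "(\<lambda>n. J U n - z *s U n) \<in> l2" by (simp add: l2_diff l2_scale)
  thus ?thesis using U by (simp add: jacobi_adj_eq resolvent_eqI)
qed

lemma is_resolvent_resolvent: "is_resolvent (jacobi_adj A B) (jacobi_adj_dom A B) z resolvent"
  unfolding is_resolvent_def
  using resolvent_solves(1) resolvent_lincomb resolvent_bound resolvent_in_jacobi_adj_dom
    resolvent_jacobi_adj by blast

end

section \<open>The Green function\<close>

definition wronskian ::
  "(nat \<Rightarrow> 'n::finite cmat) \<Rightarrow> (nat \<Rightarrow> 'n cmat) \<Rightarrow> (nat \<Rightarrow> 'n cmat) \<Rightarrow> nat \<Rightarrow> 'n cmat" where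
  "wronskian A X Y k = X k ** A k ** Y (Suc k) - X (Suc k) ** madj (A k) ** Y k"

lemma wronskian_eq_initial:
  fixes A B X Y :: "nat \<Rightarrow> complex^'n::finite^'n"
  assumes row: "\<And>n. smat z (X (Suc n)) = X (Suc (Suc n)) ** madj (A (Suc n)) + X (Suc n) ** B (Suc n) + X n ** A n"
    and col: "\<And>n. smat z (Y (Suc n)) = A (Suc n) ** Y (Suc (Suc n)) + B (Suc n) ** Y (Suc n) + madj (A n) ** Y n"
  shows "wronskian A X Y k = X 0 ** (A 0 ** Y 1) - (X 1 ** madj (A 0)) ** Y 0"
proof (induct k)
  case (Suc k)
  have c: "A (Suc k) ** Y (Suc (Suc k)) = smat z (Y (Suc k)) - B (Suc k) ** Y (Suc k) - madj (A k) ** Y k"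
    using col[of k] by (simp add: algebra_simps)
  have r: "X (Suc (Suc k)) ** madj (A (Suc k)) = smat z (X (Suc k)) - X (Suc k) ** B (Suc k) - X k ** A k"
    using row[of k] by (simp add: algebra_simps)
  have "wronskian A X Y (Suc k)
      = X (Suc k) ** (A (Suc k) ** Y (Suc (Suc k))) - (X (Suc (Suc k)) ** madj (A (Suc k))) ** Y (Suc k)"
    by (simp add: wronskian_def matrix_mul_assoc)
  also have "\<dots> = wronskian A X Y k"
    unfolding c r by (simp add: wronskian_def matrix_distribs matrix_mul_assoc algebra_simps)
  finally show ?case using Suc by simp
qed (simp add: wronskian_def matrix_mul_assoc)

lemma wronskian_vector_mult:
  "wronskian A X Y k *v v = X k *v (A k *v (Y (Suc k) *v v)) - X (Suc k) *v (madj (A k) *v (Y k *v v))"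
  by (simp add: wronskian_def matrix_vector_mult_diff_rdistrib matrix_vector_mul_assoc matrix_mul_assoc)

text \<open>The functions of the second kind enter the Green function only through these properties;
  they are verified for \<open>F\<^sub>n = Q\<^sub>n + P\<^sub>n S\<close> in the last section.\<close>
locale jacobi_second_kind = jacobi_limit_point A B P z
  for A B :: "nat \<Rightarrow> complex^'n::finite^'n" and P z +
  fixes F :: "nat \<Rightarrow> complex \<Rightarrow> complex^'n^'n"
  assumes F_Suc_recurrence: "\<And>w n. Im w \<noteq> 0 \<Longrightarrow>
      smat w (F (Suc n) w) = A (Suc n) ** F (Suc (Suc n)) w + B (Suc n) ** F (Suc n) w + madj (A n) ** F n w"
    and F_0_recurrence: "\<And>w. Im w \<noteq> 0 \<Longrightarrow>
      A 0 ** F 1 w + B 0 ** F 0 w - smat w (F 0 w) = matrix_inv (madj (P 0 (cnj w)))"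
    and F_0_symmetric: "madj (F 0 (cnj z)) ** matrix_inv (madj (P 0 (cnj z))) = matrix_inv (P 0 z) ** F 0 z"
    and F_l2: "\<And>y. summable (\<lambda>n. (norm (F n z *v y))\<^sup>2)"
begin

abbreviation "Pz n \<equiv> P n z"
abbreviation "Fz n \<equiv> F n z"
abbreviation "Ps n \<equiv> madj (P n (cnj z))"
abbreviation "Fs n \<equiv> madj (F n (cnj z))"

lemma madj_B: "madj (B n) = B n"
  using hermitian_B by (simp add: hermitian_def)

lemma Ps_Suc_recurrence:
  "smat z (Ps (Suc n)) = Ps (Suc (Suc n)) ** madj (A (Suc n)) + Ps (Suc n) ** B (Suc n) + Ps n ** A n"
  using arg_cong[OF P_Suc_recurrence[of "cnj z" n], of madj] by (simp add: matrix_distribs madj_B)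

lemma Fs_Suc_recurrence:
  "smat z (Fs (Suc n)) = Fs (Suc (Suc n)) ** madj (A (Suc n)) + Fs (Suc n) ** B (Suc n) + Fs n ** A n"
  using arg_cong[OF F_Suc_recurrence[of "cnj z" n], of madj] nonreal
  by (simp add: matrix_distribs madj_B)

lemma Pz_1: "A 0 ** Pz 1 = smat z (Pz 0) - B 0 ** Pz 0"
  using P_0_recurrence[of z] by simp

lemma Ps_1: "Ps 1 ** madj (A 0) = smat z (Ps 0) - Ps 0 ** B 0"
  using arg_cong[OF P_0_recurrence[of "cnj z"], of madj] by (simp add: matrix_distribs madj_B)

lemma Fz_1: "A 0 ** Fz 1 = matrix_inv (Ps 0) - B 0 ** Fz 0 + smat z (Fz 0)"
  using F_0_recurrence[OF nonreal] by (simp add: algebra_simps)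

lemma Fs_1: "Fs 1 ** madj (A 0) = matrix_inv (Pz 0) - Fs 0 ** B 0 + smat z (Fs 0)"
proof -
  have "madj (matrix_inv (madj (P 0 z))) = matrix_inv (P 0 z)"
    using madj_matrix_inv[OF invertible_madj[OF invertible_P0[of z]]] by simp
  hence row: "Fs 1 ** madj (A 0) + Fs 0 ** B 0 - smat z (Fs 0) = matrix_inv (Pz 0)"
    using arg_cong[OF F_0_recurrence[of "cnj z"], of madj] nonreal
    by (simp add: matrix_distribs madj_B)
  have "Fs 1 ** madj (A 0) = (Fs 1 ** madj (A 0) + Fs 0 ** B 0 - smat z (Fs 0)) - Fs 0 ** B 0 + smat z (Fs 0)"
    by simp
  also have "\<dots> = matrix_inv (Pz 0) - Fs 0 ** B 0 + smat z (Fs 0)"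
    by (simp only: row)
  finally show ?thesis .
qed

lemma wronskian_Ps_Pz: "wronskian A Ps Pz k = 0"
  unfolding wronskian_eq_initial[where B=B and z=z, OF Ps_Suc_recurrence P_Suc_recurrence[of z]]
    Pz_1 Ps_1
  by (simp add: matrix_distribs matrix_mul_assoc)

lemma wronskian_Ps_Fz: "wronskian A Ps Fz k = mat 1"
  unfolding wronskian_eq_initial[where B=B and z=z, OF Ps_Suc_recurrence F_Suc_recurrence[OF nonreal]]
    Fz_1 Ps_1
  by (simp add: matrix_distribs matrix_mul_assoc matrix_mul_inv_right invertible_madj invertible_P0)

lemma wronskian_Fs_Pz: "wronskian A Fs Pz k = - mat 1"
  unfolding wronskian_eq_initial[where B=B and z=z, OF Fs_Suc_recurrence P_Suc_recurrence[of z]]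
    Pz_1 Fs_1
  by (simp add: matrix_distribs matrix_mul_assoc matrix_mul_inv_left invertible_P0)

lemma wronskian_Fs_Fz: "wronskian A Fs Fz k = 0"
  unfolding wronskian_eq_initial[where B=B and z=z, OF Fs_Suc_recurrence F_Suc_recurrence[OF nonreal]]
    Fz_1 Fs_1
  using F_0_symmetric by (simp add: matrix_distribs matrix_mul_assoc)

text \<open>The Wronskian identities say that the block matrix
  \<open>T = [[P\<^sub>k, F\<^sub>k], [A\<^sub>k P\<^sub>k\<^sub>+\<^sub>1, A\<^sub>k F\<^sub>k\<^sub>+\<^sub>1]]\<close> (at \<open>z\<close>) has a left inverse built from \<open>P\<^sup>*\<close> and \<open>F\<^sup>*\<close>;
  in finite dimension this is also a right inverse, and \<open>T L = 1\<close> gives the continuity and the jump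
  of the Green function at the diagonal.\<close>
lemma green_continuity_jump:
  shows "Pz k *v (Fs k *v w) = Fz k *v (Ps k *v w)"
    and "A k *v (Fz (Suc k) *v (Ps k *v w)) - A k *v (Pz (Suc k) *v (Fs k *v w)) = w"
proof -
  define T :: "(complex^'n) \<times> (complex^'n) \<Rightarrow> (complex^'n) \<times> (complex^'n)" where
    "T p = (Pz k *v fst p + Fz k *v snd p, A k *v (Pz (Suc k) *v fst p + Fz (Suc k) *v snd p))" for p
  define L :: "(complex^'n) \<times> (complex^'n) \<Rightarrow> (complex^'n) \<times> (complex^'n)" where
    "L p = (Fs (Suc k) *v (madj (A k) *v fst p) - Fs k *v snd p,
            Ps k *v snd p - Ps (Suc k) *v (madj (A k) *v fst p))" for p
  have LT: "L (T p) = p" for p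
  proof -
    obtain a b where p: "p = (a, b)" by (cases p)
    have "- (wronskian A Fs Pz k *v a) - wronskian A Fs Fz k *v b = a"
      "wronskian A Ps Pz k *v a + wronskian A Ps Fz k *v b = b"
      by (simp_all add: wronskian_Fs_Pz wronskian_Fs_Fz wronskian_Ps_Pz wronskian_Ps_Fz
          matrix_uminus_vector_mult)
    thus ?thesis
      unfolding p T_def L_def wronskian_vector_mult
      by (simp add: matrix_vector_right_distrib matrix_vector_mult_diff_distrib algebra_simps)
  qed
  have "linear T"
    by (rule linearI) (simp_all add: T_def matrix_vector_right_distrib matrix_vector_mult_scaleR_complex
        scaleR_add_right)
  moreover have "inj T" by (metis LT injI)
  ultimately have "surj T" by (simp add: linear_injective_imp_surjective)
  hence "T (L (0, w)) = (0, w)" by (metis LT surjD)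
  hence "Pz k *v (- (Fs k *v w)) + Fz k *v (Ps k *v w) = 0"
    and "A k *v (Pz (Suc k) *v (- (Fs k *v w)) + Fz (Suc k) *v (Ps k *v w)) = w"
    by (simp_all add: T_def L_def)
  thus "Pz k *v (Fs k *v w) = Fz k *v (Ps k *v w)"
    and "A k *v (Fz (Suc k) *v (Ps k *v w)) - A k *v (Pz (Suc k) *v (Fs k *v w)) = w"
    by (simp_all add: vec.neg matrix_vector_right_distrib matrix_vector_mult_diff_distrib
        add.commute add_eq_0_iff)
qed

lemma jacobi_F: "J (\<lambda>m. Fz m *v b) (Suc m) = z *s (Fz (Suc m) *v b)"
  using arg_cong[OF F_Suc_recurrence[OF nonreal, of m], of "\<lambda>M. M *v b"]
  by (simp add: smat_vector_mult matrix_vector_mult_add_rdistrib matrix_vector_mul_assoc)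

text \<open>\<open>green_column k w n = (G\<^sub>z)\<^sub>n\<^sub>,\<^sub>k w\<close>, since \<open>Ps k = P\<^sub>k\<^sup>*(z)\<close> and \<open>Fs k = F\<^sub>k\<^sup>*(z)\<close>.\<close>
definition green_column :: "nat \<Rightarrow> complex^'n \<Rightarrow> 'n seq" where
  "green_column k w n = (if n \<le> k then Pz n *v (Fs k *v w) else Fz n *v (Ps k *v w))"

lemma green_column_tail: "n \<ge> k \<Longrightarrow> green_column k w n = Fz n *v (Ps k *v w)"
  using green_continuity_jump(1)[of k w] by (auto simp: green_column_def)

lemma green_column_l2: "green_column k w \<in> l2"
proof (rule l2_eventually_eq)
  show "(\<lambda>n. Fz n *v (Ps k *v w)) \<in> l2" using F_l2 by (simp add: l2_def)
  show "\<forall>n\<ge>k. green_column k w n = Fz n *v (Ps k *v w)" using green_column_tail by blast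
qed

lemma green_column_eq: "J (green_column k w) n - z *s green_column k w n = (if n = k then w else 0)"
proof -
  consider "n < k" | "n = k" | "n > k" by linarith
  thus ?thesis
  proof cases
    case 1
    have "J (green_column k w) n = J (\<lambda>m. Pz m *v (Fs k *v w)) n"
      by (rule jacobi_local) (use 1 in \<open>auto simp: green_column_def\<close>)
    thus ?thesis using 1 jacobi_P[of z "Fs k *v w" n] by (simp add: green_column_def)
  next
    case 3
    then obtain m where m: "n = Suc m" "m \<ge> k" by (cases n) auto
    have "J (green_column k w) n = J (\<lambda>m. Fz m *v (Ps k *v w)) n"
      by (rule jacobi_local) (use m in \<open>auto simp: green_column_tail\<close>)
    thus ?thesis using m jacobi_F[of "Ps k *v w" m] by (simp add: green_column_tail)
  next
    case 2
    have "J (green_column k w) k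
        = J (\<lambda>m. Pz m *v (Fs k *v w)) k - A k *v (Pz (Suc k) *v (Fs k *v w))
          + A k *v (Fz (Suc k) *v (Ps k *v w))"
      by (simp add: jacobi_def green_column_def)
    also have "\<dots> = z *s (Pz k *v (Fs k *v w)) + w"
      using green_continuity_jump(2)[of k w] by (simp add: jacobi_P algebra_simps)
    finally show ?thesis using 2 by (simp add: green_column_def)
  qed
qed

lemma resolvent_finite_support:
  assumes M: "\<forall>n\<ge>M. V n = 0"
  shows "resolvent V = (\<lambda>n. \<Sum>k<M. green_column k (V k) n)"
proof (rule resolvent_eqI)
  show "V \<in> l2" by (rule finseq_l2) (use M in \<open>auto simp: finseq_def\<close>)
  show "(\<lambda>n. \<Sum>k<M. green_column k (V k) n) \<in> l2" by (rule l2_sum) (rule green_column_l2)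
  show "\<forall>n. J (\<lambda>n. \<Sum>k<M. green_column k (V k) n) n - z *s (\<Sum>k<M. green_column k (V k) n) = V n"
    using M by (simp add: jacobi_sum vector_scalar_mult_sum green_column_eq not_less
        flip: sum_subtractf)
qed

end

section \<open>Integration against the matrix measure\<close>

lemma matrix_scaleR_nth:
  "(r *\<^sub>R M) $ i $ j = complex_of_real r * (M::complex^'n::finite^'m::finite) $ i $ j"
proof -
  have "(r *\<^sub>R M) $ i $ j = r *\<^sub>R (M $ i $ j)" by (simp only: vector_scaleR_component)
  thus ?thesis by (simp add: scaleR_conv_of_real)
qed

lemma bounded_linear_matrix_mult_left:
  "bounded_linear (\<lambda>M::complex^'n::finite^'m::finite. (K::complex^'m^'k::finite) ** M)"
  unfolding linear_conv_bounded_linear[symmetric] by (intro linearI)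
    (simp_all add: matrix_add_ldistrib vec_eq_iff matrix_matrix_mult_nth matrix_scaleR_nth
      sum_distrib_left scaleR_sum_right algebra_simps)

lemma bounded_linear_matrix_mult_right:
  "bounded_linear (\<lambda>M::complex^'n::finite^'m::finite. M ** (K::complex^'k::finite^'n))"
  unfolding linear_conv_bounded_linear[symmetric] by (intro linearI)
    (simp_all add: matrix_add_rdistrib vec_eq_iff matrix_matrix_mult_nth matrix_scaleR_nth
      sum_distrib_left scaleR_sum_right algebra_simps)

lemma bounded_linear_madj: "bounded_linear (madj :: complex^'n::finite^'n \<Rightarrow> _)"
  unfolding linear_conv_bounded_linear[symmetric] by (intro linearI)
    (simp_all add: madj_add vec_eq_iff matrix_scaleR_nth)

lemma bounded_linear_cinner_quadratic:
  "bounded_linear (\<lambda>M::complex^'n::finite^'n. cinner (M *v y) y)"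
  unfolding linear_conv_bounded_linear[symmetric] by (intro linearI)
    (simp_all add: matrix_vector_mult_add_rdistrib cinner_add_left cinner_def
      matrix_vector_mult_nth matrix_scaleR_nth sum_distrib_left scaleR_sum_right sum.distrib
      algebra_simps)

lemma integrable_matrix_mult_left:
  fixes f :: "'a \<Rightarrow> complex^'n::finite^'m::finite" and K :: "complex^'m^'k::finite"
  shows "integrable M f \<Longrightarrow> integrable M (\<lambda>x. K ** f x)"
  by (rule integrable_bounded_linear[OF bounded_linear_matrix_mult_left])

lemma integral_matrix_mult_left:
  fixes f :: "'a \<Rightarrow> complex^'n::finite^'m::finite" and K :: "complex^'m^'k::finite"
  shows "integrable M f \<Longrightarrow> integral\<^sup>L M (\<lambda>x. K ** f x) = K ** integral\<^sup>L M f"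
  by (rule integral_bounded_linear[OF bounded_linear_matrix_mult_left])

lemma integral_matrix_mult_right:
  fixes f :: "'a \<Rightarrow> complex^'n::finite^'m::finite" and K :: "complex^'k::finite^'n"
  shows "integrable M f \<Longrightarrow> integral\<^sup>L M (\<lambda>x. f x ** K) = integral\<^sup>L M f ** K"
  by (rule integral_bounded_linear[OF bounded_linear_matrix_mult_right])

lemma integrable_smat:
  fixes f :: "'a \<Rightarrow> complex^'n::finite^'n"
  shows "integrable M f \<Longrightarrow> integrable M (\<lambda>x. smat c (f x))"
  unfolding smat_eq_mat_mult by (rule integrable_matrix_mult_left)

lemma integral_smat:
  fixes f :: "'a \<Rightarrow> complex^'n::finite^'n"
  shows "integrable M f \<Longrightarrow> integral\<^sup>L M (\<lambda>x. smat c (f x)) = smat c (integral\<^sup>L M f)"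
  by (simp add: smat_eq_mat_mult integral_matrix_mult_left)

lemma integral_madj:
  fixes f :: "'a \<Rightarrow> complex^'n::finite^'n"
  shows "integrable M f \<Longrightarrow> integral\<^sup>L M (\<lambda>x. madj (f x)) = madj (integral\<^sup>L M f)"
  by (rule integral_bounded_linear[OF bounded_linear_madj])

lemma integral_cinner_quadratic:
  fixes f :: "'a \<Rightarrow> complex^'n::finite^'n"
  shows "integrable M f \<Longrightarrow> cinner (integral\<^sup>L M f *v y) y = integral\<^sup>L M (\<lambda>x. cinner (f x *v y) y)"
  by (rule integral_bounded_linear[OF bounded_linear_cinner_quadratic, symmetric])

lemma vector_eq_sum_axis: "(v::'a::comm_monoid_add^'n::finite) = (\<Sum>i\<in>UNIV. axis i (v $ i))"
  by (simp add: vec_eq_iff sum_component axis_def)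

lemma bounded_linear_axis: "bounded_linear (axis i :: 'a::euclidean_space \<Rightarrow> 'a^'n::finite)"
  by (simp add: linear_conv_bounded_linear[symmetric] linearI vec_eq_iff axis_def)

lemma integrable_matrix_entrywise:
  fixes f :: "'a \<Rightarrow> complex^'n::finite^'m::finite"
  assumes "\<And>i j. integrable M (\<lambda>x. f x $ i $ j)"
  shows "integrable M f"
proof -
  have "integrable M (\<lambda>x. \<Sum>i\<in>UNIV. axis i (\<Sum>j\<in>UNIV. axis j (f x $ i $ j)))"
    using assms by (intro Bochner_Integration.integrable_sum integrable_bounded_linear[OF bounded_linear_axis])
  thus ?thesis by (simp flip: vector_eq_sum_axis)
qed

definition has_moments :: "real measure \<Rightarrow> (real \<Rightarrow> complex) \<Rightarrow> bool" where
  "has_moments M g \<longleftrightarrow> g \<in> borel_measurable M \<and> (\<forall>k::nat. integrable M (\<lambda>x. \<bar>x\<bar>^k * cmod (g x)))"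

definition has_moments_mat :: "real measure \<Rightarrow> (real \<Rightarrow> complex^'n::finite^'m::finite) \<Rightarrow> bool" where
  "has_moments_mat M f \<longleftrightarrow> (\<forall>i j. has_moments M (\<lambda>x. f x $ i $ j))"

locale real_borel_measure =
  fixes M :: "real measure"
  assumes sets_eq_borel: "sets M = sets borel"
begin

lemma measurable_id [measurable]: "(\<lambda>x. x) \<in> borel_measurable M"
  by (simp add: measurable_cong_sets[OF sets_eq_borel refl])

lemma has_moments_integrable:
  assumes "has_moments M g"
  shows "integrable M g"
proof -
  have "integrable M (\<lambda>x. \<bar>x\<bar>^0 * cmod (g x))" using assms by (simp only: has_moments_def)
  thus ?thesis using assms by (simp add: has_moments_def integrable_norm_iff)
qed

lemma has_moments_dominated:
  assumes "g \<in> borel_measurable M" "\<And>k. integrable M (h k)"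
    and "\<And>k x. \<bar>x\<bar>^k * cmod (g x) \<le> h k x"
  shows "has_moments M g"
  unfolding has_moments_def
proof (intro conjI allI)
  fix k :: nat
  have [measurable]: "g \<in> borel_measurable M" by fact
  show "integrable M (\<lambda>x. \<bar>x\<bar>^k * cmod (g x))"
  proof (rule Bochner_Integration.integrable_bound[OF assms(2)[of k]])
    show "AE x in M. norm (\<bar>x\<bar> ^ k * cmod (g x)) \<le> norm (h k x)"
    proof (rule AE_I2)
      fix x
      have "norm (\<bar>x\<bar> ^ k * cmod (g x)) = \<bar>x\<bar> ^ k * cmod (g x)" by simp
      also have "\<dots> \<le> norm (h k x)" using assms(3)[of x k] by simp
      finally show "norm (\<bar>x\<bar> ^ k * cmod (g x)) \<le> norm (h k x)" .
    qed
  qed measurable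
qed fact

lemma has_moments_add:
  assumes "has_moments M f" "has_moments M g"
  shows "has_moments M (\<lambda>x. f x + g x)"
proof (rule has_moments_dominated)
  have [measurable]: "f \<in> borel_measurable M" "g \<in> borel_measurable M"
    using assms by (simp_all add: has_moments_def)
  show "(\<lambda>x. f x + g x) \<in> borel_measurable M" by measurable
  show "integrable M (\<lambda>x. \<bar>x\<bar>^k * cmod (f x) + \<bar>x\<bar>^k * cmod (g x))" for k
    using assms by (simp add: has_moments_def)
  show "\<bar>x\<bar>^k * cmod (f x + g x) \<le> \<bar>x\<bar>^k * cmod (f x) + \<bar>x\<bar>^k * cmod (g x)" for k x
    by (simp add: distrib_left[symmetric] mult_left_mono norm_triangle_ineq)
qed

lemma has_moments_sum: "(\<And>i. i \<in> S \<Longrightarrow> has_moments M (f i)) \<Longrightarrow> has_moments M (\<lambda>x. \<Sum>i\<in>S. f i x)"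
proof (induct S rule: infinite_finite_induct)
  case (insert a S)
  thus ?case using has_moments_add[of "f a" "\<lambda>x. \<Sum>i\<in>S. f i x"] by simp
qed (simp_all add: has_moments_def)

lemma has_moments_bounded_mult:
  assumes "has_moments M g" "r \<in> borel_measurable M" "\<And>x. cmod (r x) \<le> R"
  shows "has_moments M (\<lambda>x. r x * g x)"
proof (rule has_moments_dominated)
  have [measurable]: "g \<in> borel_measurable M" "r \<in> borel_measurable M"
    using assms by (simp_all add: has_moments_def)
  show "(\<lambda>x. r x * g x) \<in> borel_measurable M" by measurable
  show "integrable M (\<lambda>x. R * (\<bar>x\<bar>^k * cmod (g x)))" for k
    using assms(1) by (simp add: has_moments_def)
  show "\<bar>x\<bar>^k * cmod (r x * g x) \<le> R * (\<bar>x\<bar>^k * cmod (g x))" for k x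
    using mult_right_mono[OF assms(3)[of x], of "\<bar>x\<bar>^k * cmod (g x)"] by (simp add: norm_mult mult_ac)
qed

lemma has_moments_cmult: "has_moments M g \<Longrightarrow> has_moments M (\<lambda>x. c * g x)"
  by (rule has_moments_bounded_mult[where R="cmod c"]) auto

lemma has_moments_cnj:
  assumes "has_moments M g"
  shows "has_moments M (\<lambda>x. cnj (g x))"
proof (rule has_moments_dominated)
  have [measurable]: "g \<in> borel_measurable M" using assms by (simp add: has_moments_def)
  show "(\<lambda>x. cnj (g x)) \<in> borel_measurable M"
    by (simp add: borel_measurable_complex_iff)
  show "integrable M (\<lambda>x. \<bar>x\<bar>^k * cmod (g x))" for k using assms by (simp add: has_moments_def)
  show "\<bar>x\<bar>^k * cmod (cnj (g x)) \<le> \<bar>x\<bar>^k * cmod (g x)" for k x by simp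
qed

lemma has_moments_of_real_power_mult:
  assumes "has_moments M g"
  shows "has_moments M (\<lambda>x. of_real x ^ j * g x)"
proof (rule has_moments_dominated)
  have [measurable]: "g \<in> borel_measurable M" using assms by (simp add: has_moments_def)
  show "(\<lambda>x. of_real x ^ j * g x) \<in> borel_measurable M" by measurable
  show "integrable M (\<lambda>x. \<bar>x\<bar>^(k + j) * cmod (g x))" for k
    using assms by (simp add: has_moments_def)
  show "\<bar>x\<bar>^k * cmod (of_real x ^ j * g x) \<le> \<bar>x\<bar>^(k + j) * cmod (g x)" for k x
    by (simp add: norm_mult norm_power power_add mult_ac)
qed

lemma has_moments_mat_integrable: "has_moments_mat M f \<Longrightarrow> integrable M f"
  unfolding has_moments_mat_def by (intro integrable_matrix_entrywise has_moments_integrable) auto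

lemma has_moments_mat_sum:
  "(\<And>k. k \<in> S \<Longrightarrow> has_moments_mat M (f k)) \<Longrightarrow> has_moments_mat M (\<lambda>x. \<Sum>k\<in>S. f k x)"
  unfolding has_moments_mat_def by (simp add: sum_component has_moments_sum)

lemma has_moments_mat_mult_left: "has_moments_mat M f \<Longrightarrow> has_moments_mat M (\<lambda>x. K ** f x)"
  unfolding has_moments_mat_def matrix_matrix_mult_nth by (auto intro!: has_moments_sum has_moments_cmult)

lemma has_moments_mat_mult_right: "has_moments_mat M f \<Longrightarrow> has_moments_mat M (\<lambda>x. f x ** K)"
  unfolding has_moments_mat_def matrix_matrix_mult_nth
  by (subst mult.commute) (auto intro!: has_moments_sum has_moments_cmult)

lemma has_moments_mat_smat:
  "has_moments_mat M f \<Longrightarrow> r \<in> borel_measurable M \<Longrightarrow> (\<And>x. cmod (r x) \<le> R) \<Longrightarrow>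
    has_moments_mat M (\<lambda>x. smat (r x) (f x))"
  unfolding has_moments_mat_def by (auto intro!: has_moments_bounded_mult)

lemma has_moments_mat_madj: "has_moments_mat M f \<Longrightarrow> has_moments_mat M (\<lambda>x. madj (f x))"
  unfolding has_moments_mat_def by (auto intro!: has_moments_cnj)

lemma has_moments_mat_smat_power:
  "has_moments_mat M f \<Longrightarrow> has_moments_mat M (\<lambda>x. smat (of_real x ^ j) (f x))"
  unfolding has_moments_mat_def by (auto intro!: has_moments_of_real_power_mult)

end

section \<open>Functions of the second kind\<close>

lemma norm_cauchy_kernel_le:
  assumes "Im w \<noteq> 0"
  shows "cmod (1 / (complex_of_real x - w)) \<le> 1 / \<bar>Im w\<bar>"
proof -
  have "\<bar>Im w\<bar> \<le> cmod (complex_of_real x - w)"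
    using abs_Im_le_cmod[of "complex_of_real x - w"] by simp
  with assms show ?thesis by (simp add: norm_divide divide_simps)
qed

locale orthonormal_matrix_polys =
  fixes \<tau> :: "real measure" and W :: "real \<Rightarrow> complex^'n::finite^'n"
    and P :: "nat \<Rightarrow> complex \<Rightarrow> complex^'n^'n" and A B :: "nat \<Rightarrow> complex^'n^'n"
  assumes standing: "standing_assumptions \<tau> W" and orthonormal: "orthonormal_polys \<tau> W P"
    and three_term: "three_term P A B"
begin

sublocale real_borel_measure \<tau>
  using standing by unfold_locales (simp add: standing_assumptions_def)

lemma has_moments_W: "has_moments_mat \<tau> W"
  unfolding has_moments_mat_def
proof (intro allI)
  fix i j
  have re: "integrable \<tau> (\<lambda>x. x ^ k * Re (W x $ i $ j))"
    and im: "integrable \<tau> (\<lambda>x. x ^ k * Im (W x $ i $ j))" for k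
    using standing by (auto simp: standing_assumptions_def)
  have "(\<lambda>x. Re (W x $ i $ j)) \<in> borel_measurable \<tau>" "(\<lambda>x. Im (W x $ i $ j)) \<in> borel_measurable \<tau>"
    using borel_measurable_integrable[OF re[of 0]] borel_measurable_integrable[OF im[of 0]] by simp_all
  hence "(\<lambda>x. W x $ i $ j) \<in> borel_measurable \<tau>" by (simp add: borel_measurable_complex_iff)
  thus "has_moments \<tau> (\<lambda>x. W x $ i $ j)"
  proof (rule has_moments_dominated)
    show "integrable \<tau> (\<lambda>x. \<bar>x ^ k * Re (W x $ i $ j)\<bar> + \<bar>x ^ k * Im (W x $ i $ j)\<bar>)" for k
      by (intro Bochner_Integration.integrable_add integrable_abs re im)
    show "\<bar>x\<bar> ^ k * cmod (W x $ i $ j) \<le> \<bar>x ^ k * Re (W x $ i $ j)\<bar> + \<bar>x ^ k * Im (W x $ i $ j)\<bar>"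
      for k x
      using mult_left_mono[OF cmod_le[of "W x $ i $ j"], of "\<bar>x\<bar> ^ k"]
      by (simp add: abs_mult power_abs distrib_left)
  qed
qed

lemma posdef_W: "AE x in \<tau>. posdef (W x)"
  using standing by (simp add: standing_assumptions_def)

lemma hermitian_W: "AE x in \<tau>. madj (W x) = W x"
  using posdef_W by eventually_elim (simp add: posdef_def hermitian_def)

lemma P_expansion:
  obtains C where "\<And>n z. P n z = (\<Sum>j\<le>n. smat (z ^ j) (C n j))" "\<And>n. invertible (C n n)"
  using orthonormal by (auto simp: orthonormal_polys_def matrix_poly_seq_def)

lemma P_0_const: "P 0 w = P 0 0"
  by (rule P_expansion) simp

lemma invertible_P_0: "invertible (P 0 w)"
proof (rule P_expansion)
  fix C assume "\<And>n z. P n z = (\<Sum>j\<le>n. smat (z ^ j) (C n j))" "\<And>n. invertible (C n n)"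
  thus ?thesis by simp
qed

lemma has_moments_P_mult:
  assumes f: "has_moments_mat \<tau> f"
  shows "has_moments_mat \<tau> (\<lambda>x. P n (of_real x) ** f x)"
    and "has_moments_mat \<tau> (\<lambda>x. f x ** madj (P n (of_real x)))"
proof -
  obtain C where C: "\<And>n z. P n z = (\<Sum>j\<le>n. smat (z ^ j) (C n j))"
    using orthonormal unfolding orthonormal_polys_def matrix_poly_seq_def by blast
  have "P n (of_real x) ** f x = (\<Sum>j\<le>n. smat (of_real x ^ j) (C n j ** f x))" for x
    by (simp add: C matrix_sum_rdistrib smat_mult_left)
  moreover have "has_moments_mat \<tau> (\<lambda>x. \<Sum>j\<le>n. smat (of_real x ^ j) (C n j ** f x))"
    by (intro has_moments_mat_sum has_moments_mat_smat_power has_moments_mat_mult_left f)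
  ultimately show "has_moments_mat \<tau> (\<lambda>x. P n (of_real x) ** f x)" by simp
  have "f x ** madj (P n (of_real x)) = (\<Sum>j\<le>n. smat (of_real x ^ j) (f x ** madj (C n j)))" for x
    by (simp add: C madj_sum madj_smat matrix_sum_ldistrib smat_mult_right)
  moreover have "has_moments_mat \<tau> (\<lambda>x. \<Sum>j\<le>n. smat (of_real x ^ j) (f x ** madj (C n j)))"
    by (intro has_moments_mat_sum has_moments_mat_smat_power has_moments_mat_mult_right f)
  ultimately show "has_moments_mat \<tau> (\<lambda>x. f x ** madj (P n (of_real x)))" by simp
qed

lemma has_moments_cauchy_kernel:
  assumes "Im w \<noteq> 0" "has_moments_mat \<tau> f"
  shows "has_moments_mat \<tau> (\<lambda>x. smat (1 / (of_real x - w)) (f x))"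
  using assms by (intro has_moments_mat_smat[where R="1 / \<bar>Im w\<bar>"] norm_cauchy_kernel_le) auto

lemma integrable_P_W [simp]:
  "integrable \<tau> (\<lambda>x. P n (of_real x) ** W x)"
  "integrable \<tau> (\<lambda>x. P n (of_real x) ** W x ** madj (P m (of_real x)))"
  by (intro has_moments_mat_integrable has_moments_P_mult has_moments_W)+

lemma integrable_cauchy_P_W [simp]:
  assumes "Im w \<noteq> 0"
  shows "integrable \<tau> (\<lambda>x. smat (1 / (of_real x - w)) (P n (of_real x) ** W x))"
    and "integrable \<tau> (\<lambda>x. smat (1 / (of_real x - w)) (W x))"
  using assms by (intro has_moments_mat_integrable has_moments_cauchy_kernel has_moments_P_mult
      has_moments_W; assumption)+

definition F_integral :: "nat \<Rightarrow> complex \<Rightarrow> complex^'n^'n" where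
  "F_integral n w = integral\<^sup>L \<tau> (\<lambda>x. smat (1 / (of_real x - w)) (P n (of_real x) ** W x))"

definition S_integral :: "complex \<Rightarrow> complex^'n^'n" where
  "S_integral w = integral\<^sup>L \<tau> (\<lambda>x. smat (1 / (of_real x - w)) (W x))"

text \<open>\<open>Q\<^sub>n + P\<^sub>n S\<close> combines into the single integral \<open>\<integral> P\<^sub>n(x) W(x) / (x - w) d\<tau>\<close>.\<close>
lemma Ffun_eq_F_integral:
  assumes w: "Im w \<noteq> 0"
  shows "Ffun \<tau> W P n w = F_integral n w"
proof -
  define r where "r x = 1 / (complex_of_real x - w)" for x
  have "1 / (w - complex_of_real x) = - r x" for x
    unfolding r_def by (metis divide_minus_right minus_diff_eq)
  hence "Qfun \<tau> W P n w
      = integral\<^sup>L \<tau> (\<lambda>x. smat (r x) (P n (of_real x) ** W x) - smat (r x) (P n w ** W x))"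
    unfolding Qfun_def
    by (intro Bochner_Integration.integral_cong)
      (simp_all add: smat_uminus_left smat_mult_left matrix_diff_rdistrib smat_diff)
  also have "\<dots> = F_integral n w - integral\<^sup>L \<tau> (\<lambda>x. smat (r x) (P n w ** W x))"
  proof -
    have "integrable \<tau> (\<lambda>x. smat (r x) (P n w ** W x))"
      unfolding r_def using w by (intro has_moments_mat_integrable has_moments_cauchy_kernel
          has_moments_mat_mult_left has_moments_W)
    thus ?thesis
      using w by (simp add: Bochner_Integration.integral_diff F_integral_def r_def)
  qed
  moreover have "P n w ** Sfun \<tau> W w = integral\<^sup>L \<tau> (\<lambda>x. smat (r x) (P n w ** W x))"
    unfolding Sfun_def r_def using w by (simp add: smat_mult_right flip: integral_matrix_mult_left)
  ultimately show ?thesis by (simp add: Ffun_def)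
qed

lemma integral_P_W:
  "integral\<^sup>L \<tau> (\<lambda>x. P n (of_real x) ** W x) = (if n = 0 then matrix_inv (madj (P 0 0)) else 0)"
proof -
  have ic: "invertible (madj (P 0 0))" by (rule invertible_madj[OF invertible_P_0])
  have "integral\<^sup>L \<tau> (\<lambda>x. P n (of_real x) ** W x) ** madj (P 0 0)
      = integral\<^sup>L \<tau> (\<lambda>x. P n (of_real x) ** W x ** madj (P 0 (of_real x)))"
    by (simp add: P_0_const[of "of_real _"] flip: integral_matrix_mult_right)
  also have "\<dots> = (if n = 0 then mat 1 else 0)"
    using orthonormal by (simp add: orthonormal_polys_def)
  finally have eq: "integral\<^sup>L \<tau> (\<lambda>x. P n (of_real x) ** W x) ** madj (P 0 0)
      = (if n = 0 then mat 1 else 0)" .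
  have "integral\<^sup>L \<tau> (\<lambda>x. P n (of_real x) ** W x)
      = integral\<^sup>L \<tau> (\<lambda>x. P n (of_real x) ** W x) ** madj (P 0 0) ** matrix_inv (madj (P 0 0))"
    by (simp add: matrix_mul_assoc[symmetric] matrix_mul_inv_right[OF ic])
  also have "\<dots> = (if n = 0 then mat 1 else 0) ** matrix_inv (madj (P 0 0))"
    by (simp only: eq)
  finally show ?thesis by simp
qed

text \<open>Multiplying by \<open>x\<close> inside the Cauchy integral: \<open>x / (x - w) = 1 + w / (x - w)\<close>.\<close>
lemma F_integral_times_x:
  assumes w: "Im w \<noteq> 0"
    and R: "\<And>x. smat (of_real x) (P n (of_real x)) = R (of_real x)"
  shows "integral\<^sup>L \<tau> (\<lambda>x. smat (1 / (of_real x - w)) (R (of_real x) ** W x))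
     = integral\<^sup>L \<tau> (\<lambda>x. P n (of_real x) ** W x) + smat w (F_integral n w)"
proof -
  have "smat (1 / (of_real x - w)) (R (of_real x) ** W x)
      = P n (of_real x) ** W x + smat w (smat (1 / (of_real x - w)) (P n (of_real x) ** W x))" for x
  proof -
    have "complex_of_real x - w \<noteq> 0" using w by (auto simp: complex_eq_iff)
    hence "of_real x / (of_real x - w) = 1 + w * (1 / (of_real x - w))"
      by (simp add: field_simps)
    thus ?thesis by (simp add: R[symmetric] smat_mult_left smat_smat smat_add_left)
  qed
  thus ?thesis using w by (simp add: F_integral_def integral_smat integrable_smat)
qed

lemma F_integral_Suc_recurrence:
  assumes w: "Im w \<noteq> 0"
  shows "smat w (F_integral (Suc n) w)
    = A (Suc n) ** F_integral (Suc (Suc n)) w + B (Suc n) ** F_integral (Suc n) w + madj (A n) ** F_integral n w"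
proof -
  define R where "R y = A (Suc n) ** P (Suc (Suc n)) y + B (Suc n) ** P (Suc n) y + madj (A n) ** P n y" for y
  let ?r = "\<lambda>x::real. 1 / (complex_of_real x - w)"
  have "smat (of_real x) (P (Suc n) (of_real x)) = R (of_real x)" for x
    using three_term unfolding R_def three_term_def by (metis diff_Suc_1 le_add1 plus_1_eq_Suc)
  from F_integral_times_x[OF w this]
  have "integral\<^sup>L \<tau> (\<lambda>x. smat (?r x) (R (of_real x) ** W x)) = smat w (F_integral (Suc n) w)"
    by (simp add: integral_P_W)
  moreover have "smat (?r x) (R (of_real x) ** W x) =
      A (Suc n) ** smat (?r x) (P (Suc (Suc n)) (of_real x) ** W x)
    + B (Suc n) ** smat (?r x) (P (Suc n) (of_real x) ** W x)
    + madj (A n) ** smat (?r x) (P n (of_real x) ** W x)" for x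
    by (simp add: R_def matrix_add_rdistrib smat_add smat_mult_right matrix_mul_assoc)
  ultimately show ?thesis
    using w by (simp add: F_integral_def integrable_matrix_mult_left integral_matrix_mult_left)
qed

lemma F_integral_0_recurrence:
  assumes w: "Im w \<noteq> 0"
  shows "A 0 ** F_integral 1 w + B 0 ** F_integral 0 w - smat w (F_integral 0 w)
    = matrix_inv (madj (P 0 (cnj w)))"
proof -
  define R where "R y = A 0 ** P 1 y + B 0 ** P 0 y" for y
  let ?r = "\<lambda>x::real. 1 / (complex_of_real x - w)"
  have "smat (of_real x) (P 0 (of_real x)) = R (of_real x)" for x
    using three_term unfolding R_def three_term_def by simp
  from F_integral_times_x[OF w this]
  have "integral\<^sup>L \<tau> (\<lambda>x. smat (?r x) (R (of_real x) ** W x))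
      = matrix_inv (madj (P 0 (cnj w))) + smat w (F_integral 0 w)"
    by (simp add: integral_P_W P_0_const[of "cnj w"])
  moreover have "smat (?r x) (R (of_real x) ** W x) =
      A 0 ** smat (?r x) (P 1 (of_real x) ** W x) + B 0 ** smat (?r x) (P 0 (of_real x) ** W x)" for x
    by (simp add: R_def matrix_add_rdistrib smat_add smat_mult_right matrix_mul_assoc)
  ultimately show ?thesis
    using w by (simp add: F_integral_def integrable_matrix_mult_left integral_matrix_mult_left)
qed

lemma F_integral_0: "Im w \<noteq> 0 \<Longrightarrow> F_integral 0 w = P 0 0 ** S_integral w"
  unfolding F_integral_def S_integral_def P_0_const[of "of_real _"]
  by (simp add: smat_mult_right flip: integral_matrix_mult_left)

lemma S_integral_cnj:
  assumes w: "Im w \<noteq> 0"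
  shows "madj (S_integral (cnj w)) = S_integral w"
proof -
  have "madj (S_integral (cnj w)) = integral\<^sup>L \<tau> (\<lambda>x. smat (1 / (of_real x - w)) (madj (W x)))"
    unfolding S_integral_def using w by (simp flip: integral_madj add: madj_smat)
  also have "\<dots> = S_integral w"
  proof -
    have "integrable \<tau> (\<lambda>x. smat (1 / (of_real x - w)) (madj (W x)))"
      using w by (intro has_moments_mat_integrable has_moments_cauchy_kernel has_moments_mat_madj
          has_moments_W)
    thus ?thesis
      unfolding S_integral_def using hermitian_W w
      by (intro integral_cong_AE) (auto intro: borel_measurable_integrable)
  qed
  finally show ?thesis .
qed

lemma F_integral_0_symmetric:
  assumes w: "Im w \<noteq> 0"
  shows "madj (F_integral 0 (cnj w)) ** matrix_inv (madj (P 0 (cnj w))) = matrix_inv (P 0 w) ** F_integral 0 w"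
proof -
  have "madj (F_integral 0 (cnj w)) ** matrix_inv (madj (P 0 (cnj w)))
      = S_integral w ** (madj (P 0 0) ** matrix_inv (madj (P 0 0)))"
    using w by (simp add: F_integral_0 madj_matrix_mul S_integral_cnj P_0_const[of "cnj w"]
        matrix_mul_assoc)
  also have "\<dots> = (matrix_inv (P 0 0) ** P 0 0) ** S_integral w"
    by (simp add: matrix_mul_inv_right matrix_mul_inv_left invertible_madj invertible_P_0)
  also have "\<dots> = matrix_inv (P 0 w) ** F_integral 0 w"
    using w by (simp add: F_integral_0 P_0_const[of w] matrix_mul_assoc)
  finally show ?thesis .
qed

end

lemma integral_sandwich_nonneg:
  fixes \<Psi> W :: "'a \<Rightarrow> complex^'n::finite^'n"
  assumes int: "integrable M (\<lambda>x. madj (\<Psi> x) ** W x ** \<Psi> x)" and pos: "AE x in M. posdef (W x)"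
  shows "0 \<le> Re (cinner (integral\<^sup>L M (\<lambda>x. madj (\<Psi> x) ** W x ** \<Psi> x) *v y) y)"
proof -
  have "integrable M (\<lambda>x. cinner ((madj (\<Psi> x) ** W x ** \<Psi> x) *v y) y)"
    by (rule integrable_bounded_linear[OF bounded_linear_cinner_quadratic int])
  hence "Re (cinner (integral\<^sup>L M (\<lambda>x. madj (\<Psi> x) ** W x ** \<Psi> x) *v y) y)
      = integral\<^sup>L M (\<lambda>x. Re (cinner ((madj (\<Psi> x) ** W x ** \<Psi> x) *v y) y))"
    by (simp add: integral_cinner_quadratic[OF int])
  also have "\<dots> \<ge> 0"
  proof (rule integral_nonneg_AE)
    show "AE x in M. 0 \<le> Re (cinner ((madj (\<Psi> x) ** W x ** \<Psi> x) *v y) y)"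
      using pos
    proof eventually_elim
      fix x assume "posdef (W x)"
      hence "0 \<le> Re (cinner (W x *v (\<Psi> x *v y)) (\<Psi> x *v y))"
        unfolding posdef_def by (cases "\<Psi> x *v y = 0") (auto intro: less_imp_le)
      thus "0 \<le> Re (cinner ((madj (\<Psi> x) ** W x ** \<Psi> x) *v y) y)"
        by (simp add: cinner_madj_left flip: matrix_vector_mul_assoc)
    qed
  qed
  finally show ?thesis .
qed

lemma bessel_sandwich_expand:
  fixes W :: "complex^'n::finite^'n" and Q F :: "nat \<Rightarrow> complex^'n^'n" and r :: complex and N :: nat
  defines "\<Psi> \<equiv> smat r (mat 1) - (\<Sum>n<N. madj (Q n) ** F n)"
  shows "madj \<Psi> ** W ** \<Psi> = smat (cnj r * r) W - (\<Sum>n<N. smat (cnj r) (W ** madj (Q n)) ** F n)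
    - (\<Sum>n<N. madj (F n) ** smat r (Q n ** W)) + (\<Sum>n<N. \<Sum>m<N. madj (F n) ** (Q n ** W ** madj (Q m)) ** F m)"
proof -
  define a :: "complex^'n^'n" where "a = smat r (mat 1)"
  define b where "b = (\<Sum>n<N. madj (Q n) ** F n)"
  have ma: "madj a = smat (cnj r) (mat 1)" by (simp add: a_def madj_smat)
  have mb: "madj b = (\<Sum>n<N. madj (F n) ** Q n)" by (simp add: b_def madj_sum madj_matrix_mul)
  have "madj \<Psi> ** W ** \<Psi> = (madj a - madj b) ** W ** (a - b)"
    by (simp add: \<Psi>_def a_def b_def madj_diff)
  also have "\<dots> = madj a ** W ** a - madj b ** W ** a - (madj a ** W ** b - madj b ** W ** b)"
    by (simp only: matrix_diff_rdistrib matrix_diff_ldistrib)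
  also have "madj a ** W ** a = smat (cnj r * r) W"
    unfolding ma by (simp add: a_def smat_mult_left smat_mult_right smat_smat mult.commute)
  also have "madj b ** W ** a = (\<Sum>n<N. madj (F n) ** smat r (Q n ** W))"
    unfolding mb by (simp add: a_def matrix_sum_rdistrib smat_mult_right matrix_mul_assoc smat_sum)
  also have "madj a ** W ** b = (\<Sum>n<N. smat (cnj r) (W ** madj (Q n)) ** F n)"
    unfolding ma by (simp add: b_def matrix_sum_ldistrib smat_mult_left matrix_mul_assoc smat_sum)
  also have "madj b ** W ** b = (\<Sum>n<N. \<Sum>m<N. madj (F n) ** (Q n ** W ** madj (Q m)) ** F m)"
    unfolding mb by (simp add: b_def matrix_sum_rdistrib matrix_sum_ldistrib matrix_mul_assoc)
      (rule sum.swap)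
  finally show ?thesis by (simp add: algebra_simps)
qed

context orthonormal_matrix_polys
begin

lemma integral_cauchy_W_P_adj:
  assumes z: "Im z \<noteq> 0"
  shows "integral\<^sup>L \<tau> (\<lambda>x. smat (1 / (of_real x - cnj z)) (W x ** madj (P n (of_real x))))
    = madj (F_integral n z)"
proof -
  let ?f = "\<lambda>x. smat (1 / (of_real x - z)) (P n (of_real x) ** W x)"
  have "integrable \<tau> (\<lambda>x. smat (1 / (of_real x - cnj z)) (W x ** madj (P n (of_real x))))"
    using z by (intro has_moments_mat_integrable has_moments_cauchy_kernel has_moments_P_mult
        has_moments_W) simp
  moreover have "integrable \<tau> (\<lambda>x. madj (?f x))"
    using z by (intro integrable_bounded_linear[OF bounded_linear_madj]) simp
  moreover have "AE x in \<tau>. smat (1 / (of_real x - cnj z)) (W x ** madj (P n (of_real x))) = madj (?f x)"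
    using hermitian_W by eventually_elim (simp add: madj_smat madj_matrix_mul)
  ultimately have "integral\<^sup>L \<tau> (\<lambda>x. smat (1 / (of_real x - cnj z)) (W x ** madj (P n (of_real x))))
      = integral\<^sup>L \<tau> (\<lambda>x. madj (?f x))"
    by (intro integral_cong_AE) (auto intro: borel_measurable_integrable)
  thus ?thesis using z by (simp add: F_integral_def integral_madj)
qed

text \<open>With \<open>r(x) = 1 / (x - z)\<close> and \<open>\<Psi> = r - \<Sum>\<^sub>n\<^sub><\<^sub>N P\<^sub>n\<^sup>* F\<^sub>n(z)\<close>, orthonormality and
  \<open>F\<^sub>n(z) = \<integral> r P\<^sub>n W\<close> turn \<open>\<integral> \<Psi>\<^sup>* W \<Psi>\<close> into \<open>\<integral> |r|\<^sup>2 W - \<Sum>\<^sub>n\<^sub><\<^sub>N F\<^sub>n(z)\<^sup>* F\<^sub>n(z)\<close>.\<close>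
lemma integral_bessel_sandwich:
  fixes z :: complex and N :: nat
  assumes z: "Im z \<noteq> 0"
  defines "\<Psi> \<equiv> \<lambda>x. smat (1 / (of_real x - z)) (mat 1) - (\<Sum>n<N. madj (P n (of_real x)) ** F_integral n z)"
  shows "integrable \<tau> (\<lambda>x. madj (\<Psi> x) ** W x ** \<Psi> x)"
    and "integral\<^sup>L \<tau> (\<lambda>x. madj (\<Psi> x) ** W x ** \<Psi> x)
      = integral\<^sup>L \<tau> (\<lambda>x. smat (1 / (of_real x - cnj z) * (1 / (of_real x - z))) (W x))
        - (\<Sum>n<N. madj (F_integral n z) ** F_integral n z)"
proof -
  define r where "r x = 1 / (complex_of_real x - z)" for x
  define rc where "rc x = 1 / (complex_of_real x - cnj z)" for x
  define F where "F n = F_integral n z" for n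
  define Px where "Px n x = P n (complex_of_real x)" for n x
  define T1 where "T1 = (\<lambda>x. smat (rc x * r x) (W x))"
  define T2 where "T2 = (\<lambda>n x. smat (rc x) (W x ** madj (Px n x)) ** F n)"
  define T3 where "T3 = (\<lambda>n x. madj (F n) ** smat (r x) (Px n x ** W x))"
  define T4 where "T4 = (\<lambda>n m x. madj (F n) ** (Px n x ** W x ** madj (Px m x)) ** F m)"
  have expand: "madj (\<Psi> x) ** W x ** \<Psi> x
      = T1 x - (\<Sum>n<N. T2 n x) - (\<Sum>n<N. T3 n x) + (\<Sum>n<N. \<Sum>m<N. T4 n m x)" for x
    using bessel_sandwich_expand[where r="r x" and N=N and Q="\<lambda>n. Px n x" and F=F and W="W x"]
    by (simp add: \<Psi>_def T1_def T2_def T3_def T4_def r_def rc_def F_def Px_def)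
  have z': "Im (cnj z) \<noteq> 0" using z by simp
  have "cmod (rc x * r x) \<le> 1 / \<bar>Im z\<bar> * (1 / \<bar>Im z\<bar>)" for x
    unfolding rc_def r_def norm_mult
    using norm_cauchy_kernel_le[OF z', of x] norm_cauchy_kernel_le[OF z, of x] by (intro mult_mono) auto
  hence "has_moments_mat \<tau> T1"
    unfolding T1_def by (intro has_moments_mat_smat has_moments_W) (auto simp: r_def rc_def)
  moreover have "has_moments_mat \<tau> (T2 n)" for n
    unfolding T2_def rc_def Px_def
    by (intro has_moments_mat_mult_right has_moments_cauchy_kernel[OF z'] has_moments_P_mult(2)
        has_moments_W)
  moreover have "has_moments_mat \<tau> (T3 n)" for n
    unfolding T3_def r_def Px_def
    by (intro has_moments_mat_mult_left has_moments_cauchy_kernel[OF z] has_moments_P_mult(1)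
        has_moments_W)
  moreover have "has_moments_mat \<tau> (T4 n m)" for n m
    unfolding T4_def Px_def
    by (intro has_moments_mat_mult_left has_moments_mat_mult_right has_moments_P_mult has_moments_W)
  ultimately have int: "integrable \<tau> T1" "integrable \<tau> (T2 n)" "integrable \<tau> (T3 n)"
    "integrable \<tau> (T4 n m)" for n m
    by (simp_all add: has_moments_mat_integrable)
  thus "integrable \<tau> (\<lambda>x. madj (\<Psi> x) ** W x ** \<Psi> x)" unfolding expand by simp
  have "integrable \<tau> (\<lambda>x. smat (rc x) (W x ** madj (Px n x)))" for n
    unfolding rc_def Px_def
    by (intro has_moments_mat_integrable has_moments_cauchy_kernel[OF z'] has_moments_P_mult(2)
        has_moments_W)
  hence "integral\<^sup>L \<tau> (T2 n) = madj (F n) ** F n" for n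
    unfolding T2_def using integral_cauchy_W_P_adj[OF z, of n]
    by (simp add: integral_matrix_mult_right rc_def Px_def F_def)
  moreover have "integral\<^sup>L \<tau> (T3 n) = madj (F n) ** F n" for n
    unfolding T3_def using z by (simp add: integral_matrix_mult_left r_def Px_def F_def F_integral_def)
  moreover have "integral\<^sup>L \<tau> (T4 n m) = (if n = m then madj (F n) ** F m else 0)" for n m
    using orthonormal
    by (simp add: T4_def Px_def integral_matrix_mult_left integral_matrix_mult_right
        integrable_matrix_mult_left orthonormal_polys_def)
  ultimately show "integral\<^sup>L \<tau> (\<lambda>x. madj (\<Psi> x) ** W x ** \<Psi> x)
      = integral\<^sup>L \<tau> (\<lambda>x. smat (1 / (of_real x - cnj z) * (1 / (of_real x - z))) (W x))
        - (\<Sum>n<N. madj (F_integral n z) ** F_integral n z)"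
    unfolding expand using int by (simp add: T1_def r_def rc_def F_def)
qed

lemma bessel_partial_sums:
  assumes z: "Im z \<noteq> 0"
  shows "(\<Sum>n<N. (norm (F_integral n z *v y))\<^sup>2)
    \<le> Re (cinner (integral\<^sup>L \<tau> (\<lambda>x. smat (1 / (of_real x - cnj z) * (1 / (of_real x - z))) (W x)) *v y) y)"
proof -
  have "Re (cinner ((madj (F_integral n z) ** F_integral n z) *v y) y) = (norm (F_integral n z *v y))\<^sup>2"
    for n by (simp add: cinner_madj_left cinner_self flip: matrix_vector_mul_assoc)
  thus ?thesis
    using integral_sandwich_nonneg[OF integral_bessel_sandwich(1)[OF z] posdef_W, of N y]
    unfolding integral_bessel_sandwich(2)[OF z]
    by (simp add: matrix_vector_mult_diff_rdistrib matrix_sum_vector_mult cinner_diff_left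
        cinner_sum_left)
qed

lemma F_integral_l2:
  assumes "Im z \<noteq> 0"
  shows "summable (\<lambda>n. (norm (F_integral n z *v y))\<^sup>2)"
  by (rule summableI_nonneg_bounded[OF _ bessel_partial_sums[OF assms]]) simp

end

lemma (in orthonormal_matrix_polys) jacobi_second_kind_Ffun:
  assumes "\<And>n. invertible (A n)" "\<And>n. hermitian (B n)" "Im z \<noteq> 0"
    and "\<And>v. v \<noteq> 0 \<Longrightarrow> \<not> summable (\<lambda>n. (norm (P n z *v v))\<^sup>2)"
  shows "jacobi_second_kind A B P z (Ffun \<tau> W P)"
  by unfold_locales
    (use three_term assms invertible_P_0 F_integral_Suc_recurrence F_integral_0_recurrence
      F_integral_0_symmetric F_integral_l2 in \<open>simp_all add: Ffun_eq_F_integral\<close>)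

theorem theorem4p15:
  fixes \<tau> :: "real measure" and W :: "real \<Rightarrow> complex ^ 'n::finite ^ 'n"
    and P :: "nat \<Rightarrow> complex \<Rightarrow> complex ^ 'n ^ 'n"
    and A B :: "nat \<Rightarrow> complex ^ 'n ^ 'n"
    and z :: complex
  assumes std: "standing_assumptions \<tau> W"
    and orth: "orthonormal_polys \<tau> W P"
    and P0: "\<forall>x. P 0 x = inv_sqrt (moment0 \<tau> W)"
    and rec: "three_term P A B"
    and A_inv: "\<forall>n. invertible (A n)"
    and B_sa: "\<forall>n. hermitian (B n)"
    and divergent: "\<forall>w. Im w \<noteq> 0 \<longrightarrow> (\<forall>v::complex ^ 'n. v \<noteq> 0 \<longrightarrow>
                      \<not> summable (\<lambda>n. (norm (P n w *v v))\<^sup>2))"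
    and z_nonreal: "Im z \<noteq> 0"
  shows "z \<in> resolvent_set (jacobi_adj A B) (jacobi_adj_dom A B) \<and>
         (\<exists>G. is_resolvent (jacobi_adj A B) (jacobi_adj_dom A B) z G \<and>
              (\<forall>V\<in>finseq. G V = Gop \<tau> W P z V))"
proof -
  interpret orthonormal_matrix_polys \<tau> W P A B by unfold_locales (fact std orth rec)+
  interpret jacobi_second_kind A B P z "Ffun \<tau> W P"
    using A_inv B_sa z_nonreal divergent by (intro jacobi_second_kind_Ffun) auto
  have "resolvent V = Gop \<tau> W P z V" if V: "V \<in> finseq" for V
  proof -
    obtain M where M: "\<forall>n\<ge>M. V n = 0" using V by (auto simp: finseq_def)
    have "Gmat \<tau> W P z n k *v w = green_column k w n" for n k w
      by (simp add: Gmat_def star_fun_def green_column_def matrix_vector_mul_assoc)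
    moreover have "Gop \<tau> W P z V n = (\<Sum>k<M. Gmat \<tau> W P z n k *v V k)" for n
      unfolding Gop_def by (rule suminf_finite) (use M in auto)
    ultimately show ?thesis by (simp add: resolvent_finite_support[OF M] fun_eq_iff)
  qed
  thus ?thesis using is_resolvent_resolvent unfolding resolvent_set_def by auto
qed

end
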